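(* Let $\mathfrak{A}$ be a separable unital C*-algebra and let $\boldsymbol{\pi}=(\pi_n)_{n\ge1}$ be a random AP sequence for $\mathfrak{A}$ with $\dim\pi_n = d_n$ that converges in the LD sense. Let $a\in\mathfrak{A}$ be non-negative. For $c>0$ let $S_c := \{\phi\in\mathcal{S}_1(\mathfrak{A}):\phi(a)\ge c\}$ and $I(c) := \sup\{\mathrm{h}^0_{\boldsymbol{\pi}}(\phi):\phi\in S_c\}$. Then \[I(c)\cdot d_n + o(d_n)\ \ge\ \log\mathbf{P}(\|\pi_n(a)\|\ge c)\ \ge\ \sup\{I(c'):c'>c\}\cdot d_n - o(d_n)\] as $n\to\infty$ (with the obvious adjustments if $I(c)=-\infty$).
   Context: $\mathcal{S}_1(\mathfrak{A})$ is the state space of $\mathfrak{A}$ with the weak* topology; more generally $\mathfrak{B}(\mathfrak{A},\mathrm{M}_k)_+$ is the set of completely positive maps $\mathfrak{A}\to\mathrm{M}_k$ with the pointwise topology. A random AP sequence is a sequence of random unital $\ast$-representations $\pi_n$ on $\mathbf{C}^{d_n}$, $d_n\to\infty$. For a representation $\pi$ on $H$ and $O\subset\mathfrak{B}(\mathfrak{A},\mathrm{M}_k)_+$, $\mathcal{X}(\pi,O)$ is the set of $(v_1,\dots,v_k)\in H^k$ whose type $a\mapsto[\langle\pi(a)v_j,v_i\rangle]_{i,j}$ lies in $O$. $\mathrm{h}^0_{\boldsymbol{\pi}}(\phi):=\inf_O\limsup_n\frac1{d_n}\log\mathbf{P}(\mathcal{X}(\pi_n,O)\ne\emptyset)$,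 the infimum over neighbourhoods $O$ of $\phi$. $\boldsymbol{\pi}$ converges in the LD sense if for every $k$ and every $\phi\in\mathfrak{B}(\mathfrak{A},\mathrm{M}_k)_+$: (i) for every $a'>\mathrm{h}^0_{\boldsymbol{\pi}}(\phi)$ some open neighbourhood $O$ of $\phi$ has $\limsup_n\frac1{d_n}\log\mathbf{P}(\mathcal{X}(\pi_n,O)\ne\emptyset)<a'$, and (ii) every open neighbourhood $O$ of $\phi$ has $\liminf_n\frac1{d_n}\log\mathbf{P}(\mathcal{X}(\pi_n,O)\ne\emptyset)\ge\mathrm{h}^0_{\boldsymbol{\pi}}(\phi)$. *)

theory Defs
  imports "HOL-Probability.Probability" "Jordan_Normal_Form.Matrix"
begin

section \<open>Abstract unital C*-algebras (carrier = the whole type)\<close>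

record 'a cstar_alg =
  cadd  :: "'a \<Rightarrow> 'a \<Rightarrow> 'a"
  cmul  :: "'a \<Rightarrow> 'a \<Rightarrow> 'a"
  csmul :: "complex \<Rightarrow> 'a \<Rightarrow> 'a"
  czero :: 'a
  cone  :: 'a
  cstar :: "'a \<Rightarrow> 'a"
  cnorm :: "'a \<Rightarrow> real"

definition cminus :: "'a cstar_alg \<Rightarrow> 'a \<Rightarrow> 'a \<Rightarrow> 'a" where
  "cminus A x y = cadd A x (csmul A (-1) y)"

definition cstar_algebra :: "'a cstar_alg \<Rightarrow> bool" where
  "cstar_algebra A \<longleftrightarrow>
     \<comment> \<open>complex vector space\<close>
     (\<forall>x y z. cadd A (cadd A x y) z = cadd A x (cadd A y z)) \<and>
     (\<forall>x y. cadd A x y = cadd A y x) \<and>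
     (\<forall>x. cadd A x (czero A) = x) \<and>
     (\<forall>x. cadd A x (csmul A (-1) x) = czero A) \<and>
     (\<forall>x. csmul A 1 x = x) \<and>
     (\<forall>\<alpha> \<beta> x. csmul A (\<alpha> * \<beta>) x = csmul A \<alpha> (csmul A \<beta> x)) \<and>
     (\<forall>\<alpha> \<beta> x. csmul A (\<alpha> + \<beta>) x = cadd A (csmul A \<alpha> x) (csmul A \<beta> x)) \<and>
     (\<forall>\<alpha> x y. csmul A \<alpha> (cadd A x y) = cadd A (csmul A \<alpha> x) (csmul A \<alpha> y)) \<and>
     \<comment> \<open>unital associative algebra\<close>
     (\<forall>x y z. cmul A (cmul A x y) z = cmul A x (cmul A y z)) \<and>
     (\<forall>x y z. cmul A x (cadd A y z) = cadd A (cmul A x y) (cmul A x z)) \<and>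
     (\<forall>x y z. cmul A (cadd A x y) z = cadd A (cmul A x z) (cmul A y z)) \<and>
     (\<forall>\<alpha> x y. cmul A (csmul A \<alpha> x) y = csmul A \<alpha> (cmul A x y)) \<and>
     (\<forall>\<alpha> x y. cmul A x (csmul A \<alpha> y) = csmul A \<alpha> (cmul A x y)) \<and>
     (\<forall>x. cmul A (cone A) x = x \<and> cmul A x (cone A) = x) \<and>
     \<comment> \<open>involution\<close>
     (\<forall>x. cstar A (cstar A x) = x) \<and>
     (\<forall>x y. cstar A (cadd A x y) = cadd A (cstar A x) (cstar A y)) \<and>
     (\<forall>\<alpha> x. cstar A (csmul A \<alpha> x) = csmul A (cnj \<alpha>) (cstar A x)) \<and>
     (\<forall>x y. cstar A (cmul A x y) = cmul A (cstar A y) (cstar A x)) \<and>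
     \<comment> \<open>submultiplicative norm satisfying the C*-identity\<close>
     (\<forall>x. cnorm A x = 0 \<longleftrightarrow> x = czero A) \<and>
     (\<forall>x y. cnorm A (cadd A x y) \<le> cnorm A x + cnorm A y) \<and>
     (\<forall>\<alpha> x. cnorm A (csmul A \<alpha> x) = cmod \<alpha> * cnorm A x) \<and>
     (\<forall>x y. cnorm A (cmul A x y) \<le> cnorm A x * cnorm A y) \<and>
     (\<forall>x. cnorm A (cmul A (cstar A x) x) = (cnorm A x)\<^sup>2) \<and>
     \<comment> \<open>completeness\<close>
     (\<forall>s :: nat \<Rightarrow> 'a. (\<forall>e>0. \<exists>N. \<forall>m\<ge>N. \<forall>n\<ge>N. cnorm A (cminus A (s m) (s n)) < e)
         \<longrightarrow> (\<exists>l. (\<lambda>n. cnorm A (cminus A (s n) l)) \<longlonglongrightarrow> 0))"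

definition cstar_separable :: "'a cstar_alg \<Rightarrow> bool" where
  "cstar_separable A \<longleftrightarrow>
     (\<exists>D. countable D \<and> (\<forall>x. \<forall>e>0. \<exists>y\<in>D. cnorm A (cminus A x y) < e))"

definition cpositive :: "'a cstar_alg \<Rightarrow> 'a \<Rightarrow> bool" where
  "cpositive A x \<longleftrightarrow> (\<exists>b. x = cmul A (cstar A b) b)"

definition cplx_nonneg :: "complex \<Rightarrow> bool" where
  "cplx_nonneg z \<longleftrightarrow> Im z = 0 \<and> Re z \<ge> 0"

definition lin_map :: "'a cstar_alg \<Rightarrow> ('a \<Rightarrow> complex mat) \<Rightarrow> bool" where
  "lin_map A \<phi> \<longleftrightarrow> (\<forall>x y. \<phi> (cadd A x y) = \<phi> x + \<phi> y) \<and>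
                     (\<forall>\<alpha> x. \<phi> (csmul A \<alpha> x) = \<alpha> \<cdot>\<^sub>m \<phi> x)"

text \<open>Completely positive maps A -> M_k: linear, M_k-valued, and for every m the
  amplification to M_m(A) -> M_m(M_k) maps positive elements b* b (b in M_m(A))
  to positive semidefinite matrices.\<close>
definition cp_maps :: "'a cstar_alg \<Rightarrow> nat \<Rightarrow> ('a \<Rightarrow> complex mat) set" where
  "cp_maps A k = {\<phi>. lin_map A \<phi> \<and> (\<forall>x. \<phi> x \<in> carrier_mat k k) \<and>
     (\<forall>(m::nat) (b :: nat \<Rightarrow> nat \<Rightarrow> 'a) (w :: nat \<Rightarrow> nat \<Rightarrow> complex).
        let bb = (\<lambda>i j. foldr (cadd A) (map (\<lambda>l. cmul A (cstar A (b l i)) (b l j)) [0..<m]) (czero A))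
        in cplx_nonneg (\<Sum>i<m. \<Sum>j<m. \<Sum>r<k. \<Sum>s<k.
              cnj (w i r) * (\<phi> (bb i j) $$ (r, s)) * w j s))}"

definition states :: "'a cstar_alg \<Rightarrow> ('a \<Rightarrow> complex) set" where
  "states A = {\<phi>. (\<forall>x y. \<phi> (cadd A x y) = \<phi> x + \<phi> y) \<and>
                  (\<forall>\<alpha> x. \<phi> (csmul A \<alpha> x) = \<alpha> * \<phi> x) \<and>
                  (\<forall>b. cplx_nonneg (\<phi> (cmul A (cstar A b) b))) \<and>
                  \<phi> (cone A) = 1}"

definition state_as_cp :: "('a \<Rightarrow> complex) \<Rightarrow> ('a \<Rightarrow> complex mat)" where
  "state_as_cp \<phi> = (\<lambda>x. mat 1 1 (\<lambda>_. \<phi> x))"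

definition basic_nbhd :: "'a cstar_alg \<Rightarrow> nat \<Rightarrow> ('a \<Rightarrow> complex mat) \<Rightarrow> 'a set \<Rightarrow> real \<Rightarrow> ('a \<Rightarrow> complex mat) set" where
  "basic_nbhd A k \<phi> F e = {\<psi> \<in> cp_maps A k. \<forall>x\<in>F. \<forall>r<k. \<forall>s<k. cmod (\<psi> x $$ (r,s) - \<phi> x $$ (r,s)) < e}"

definition cp_nbhd :: "'a cstar_alg \<Rightarrow> nat \<Rightarrow> ('a \<Rightarrow> complex mat) \<Rightarrow> ('a \<Rightarrow> complex mat) set \<Rightarrow> bool" where
  "cp_nbhd A k \<phi> U \<longleftrightarrow> U \<subseteq> cp_maps A k \<and>
     (\<exists>F e. finite F \<and> e > 0 \<and> basic_nbhd A k \<phi> F e \<subseteq> U)"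

definition cp_open :: "'a cstar_alg \<Rightarrow> nat \<Rightarrow> ('a \<Rightarrow> complex mat) set \<Rightarrow> bool" where
  "cp_open A k U \<longleftrightarrow> U \<subseteq> cp_maps A k \<and> (\<forall>\<phi>\<in>U. cp_nbhd A k \<phi> U)"

definition unital_star_rep :: "'a cstar_alg \<Rightarrow> nat \<Rightarrow> ('a \<Rightarrow> complex mat) \<Rightarrow> bool" where
  "unital_star_rep A d \<pi> \<longleftrightarrow> (\<forall>x. \<pi> x \<in> carrier_mat d d) \<and> lin_map A \<pi> \<and>
     (\<forall>x y. \<pi> (cmul A x y) = \<pi> x * \<pi> y) \<and>
     \<pi> (cone A) = 1\<^sub>m d \<and>
     (\<forall>x. \<pi> (cstar A x) = mat d d (\<lambda>(i,j). cnj (\<pi> x $$ (j,i))))"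

definition cinner :: "complex vec \<Rightarrow> complex vec \<Rightarrow> complex" where
  "cinner u w = (\<Sum>i<dim_vec u. u $ i * cnj (w $ i))"

definition type_of :: "('a \<Rightarrow> complex mat) \<Rightarrow> complex vec list \<Rightarrow> ('a \<Rightarrow> complex mat)" where
  "type_of \<pi> vs = (\<lambda>x. mat (length vs) (length vs) (\<lambda>(i,j). cinner (\<pi> x *\<^sub>v (vs ! j)) (vs ! i)))"

definition Xset :: "nat \<Rightarrow> nat \<Rightarrow> ('a \<Rightarrow> complex mat) \<Rightarrow> ('a \<Rightarrow> complex mat) set \<Rightarrow> complex vec list set" where
  "Xset d k \<pi> U = {vs. length vs = k \<and> (\<forall>v\<in>set vs. v \<in> carrier_vec d) \<and> type_of \<pi> vs \<in> U}"

definition random_AP_seq :: "'a cstar_alg \<Rightarrow> 'w measure \<Rightarrow> (nat \<Rightarrow> nat) \<Rightarrow> (nat \<Rightarrow> 'w \<Rightarrow> 'a \<Rightarrow> complex mat) \<Rightarrow> bool" where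
  "random_AP_seq A M d \<pi> \<longleftrightarrow> prob_space M \<and> filterlim d at_top sequentially \<and>
     (\<forall>n. \<forall>\<omega>\<in>space M. unital_star_rep A (d n) (\<pi> n \<omega>)) \<and>
     (\<forall>n x i j. (\<lambda>\<omega>. \<pi> n \<omega> x $$ (i,j)) \<in> borel_measurable M)"

definition elog :: "real \<Rightarrow> ereal" where
  "elog p = (if p \<le> 0 then -\<infinity> else ereal (ln p))"

definition Pnonempty :: "'w measure \<Rightarrow> (nat \<Rightarrow> nat) \<Rightarrow> (nat \<Rightarrow> 'w \<Rightarrow> 'a \<Rightarrow> complex mat) \<Rightarrow> nat \<Rightarrow> ('a \<Rightarrow> complex mat) set \<Rightarrow> nat \<Rightarrow> real" where
  "Pnonempty M d \<pi> k U n = measure M {\<omega> \<in> space M. Xset (d n) k (\<pi> n \<omega>) U \<noteq> {}}"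

definition rate :: "'w measure \<Rightarrow> (nat \<Rightarrow> nat) \<Rightarrow> (nat \<Rightarrow> 'w \<Rightarrow> 'a \<Rightarrow> complex mat) \<Rightarrow> nat \<Rightarrow> ('a \<Rightarrow> complex mat) set \<Rightarrow> nat \<Rightarrow> ereal" where
  "rate M d \<pi> k U n = ereal (1 / real (d n)) * elog (Pnonempty M d \<pi> k U n)"

definition h0 :: "'a cstar_alg \<Rightarrow> 'w measure \<Rightarrow> (nat \<Rightarrow> nat) \<Rightarrow> (nat \<Rightarrow> 'w \<Rightarrow> 'a \<Rightarrow> complex mat) \<Rightarrow> nat \<Rightarrow> ('a \<Rightarrow> complex mat) \<Rightarrow> ereal" where
  "h0 A M d \<pi> k \<phi> = (INF U \<in> {U. cp_nbhd A k \<phi> U}. limsup (rate M d \<pi> k U))"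

definition LD_convergent :: "'a cstar_alg \<Rightarrow> 'w measure \<Rightarrow> (nat \<Rightarrow> nat) \<Rightarrow> (nat \<Rightarrow> 'w \<Rightarrow> 'a \<Rightarrow> complex mat) \<Rightarrow> bool" where
  "LD_convergent A M d \<pi> \<longleftrightarrow>
     (\<forall>k. \<forall>\<phi>\<in>cp_maps A k.
        (\<forall>a'. a' > h0 A M d \<pi> k \<phi> \<longrightarrow>
           (\<exists>U. cp_open A k U \<and> \<phi> \<in> U \<and> limsup (rate M d \<pi> k U) < a')) \<and>
        (\<forall>U. cp_open A k U \<and> \<phi> \<in> U \<longrightarrow> liminf (rate M d \<pi> k U) \<ge> h0 A M d \<pi> k \<phi>))"

definition vnorm :: "complex vec \<Rightarrow> real" where
  "vnorm v = sqrt (\<Sum>i<dim_vec v. (cmod (v $ i))\<^sup>2)"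

definition opnorm :: "complex mat \<Rightarrow> real" where
  "opnorm B = Sup {vnorm (B *\<^sub>v v) | v. v \<in> carrier_vec (dim_col B) \<and> vnorm v \<le> 1}"

definition I_fun :: "'a cstar_alg \<Rightarrow> 'w measure \<Rightarrow> (nat \<Rightarrow> nat) \<Rightarrow> (nat \<Rightarrow> 'w \<Rightarrow> 'a \<Rightarrow> complex mat) \<Rightarrow> 'a \<Rightarrow> real \<Rightarrow> ereal" where
  "I_fun A M d \<pi> a c = Sup {h0 A M d \<pi> 1 (state_as_cp \<phi>) | \<phi>. \<phi> \<in> states A \<and> Re (\<phi> a) \<ge> c}"

end

(*
  Every state psi with Re psi(a) >= c has h0(psi) <= I(c), so for t > I(c) LD
  convergence gives psi a neighbourhood U whose events "X(pi_n, U) nonempty" have exponential rate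
  below t.  If ||pi_n(a)|| >= c with a = b* b, some unit vector v has <pi_n(a) v, v> close to c, and
  its vector state lies in the compact set of states with Re psi(a) >= c - 1/(N+1); finitely many
  such neighbourhoods cover it, so P(||pi_n(a)|| >= c) is bounded by a finite sum of probabilities
  of rate below t.

  For c' > c and a state phi with Re phi(a) >= c', a small neighbourhood of phi only
  contains types of vectors v with <pi_n(a) v, v> >= c ||v||^2, so the event "X(pi_n, U) nonempty"
  is contained in "||pi_n(a)|| >= c", whose liminf rate is therefore at least h0(phi).

  Underneath, finite-dimensional *-representations are contractive (via the Neumann series in A),
  which makes vector states norm-bounded and uniformly Lipschitz; with separability of A this
  makes the events measurable.
*)

theory Submission
  imports Defs "Jordan_Normal_Form.Determinant"
begin

section \<open>Complex vectors and matrices\<close>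

lemma vnorm_L2: "vnorm v = L2_set (\<lambda>i. cmod (v$i)) {..<dim_vec v}"
  unfolding vnorm_def L2_set_def by simp

lemma vnorm_nonneg [simp]: "vnorm v \<ge> 0"
  unfolding vnorm_def by (simp add: sum_nonneg)

lemma vnorm_square: "(vnorm v)\<^sup>2 = (\<Sum>i<dim_vec v. (cmod (v$i))\<^sup>2)"
  unfolding vnorm_def by (simp add: sum_nonneg)

lemma vnorm_eq_0_iff: "vnorm v = 0 \<longleftrightarrow> (\<forall>i<dim_vec v. v$i = 0)"
  unfolding vnorm_def by (auto simp add: sum_nonneg_eq_0_iff)

lemma vnorm_smult: "vnorm (k \<cdot>\<^sub>v v) = cmod k * vnorm v"
proof -
  have "(vnorm (k \<cdot>\<^sub>v v))\<^sup>2 = (cmod k * vnorm v)\<^sup>2"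
    by (simp add: vnorm_square power_mult_distrib norm_mult sum_distrib_left)
  thus ?thesis by (simp add: power2_eq_iff_nonneg)
qed

lemma vnorm_unit_scale:
  assumes "vnorm v \<noteq> 0"
  shows "vnorm (complex_of_real (1 / vnorm v) \<cdot>\<^sub>v v) = 1"
  using assms by (simp add: vnorm_smult norm_divide)

lemma cinner_self: "cinner v v = complex_of_real ((vnorm v)\<^sup>2)"
  unfolding cinner_def vnorm_square of_real_sum
  by (rule sum.cong) (simp_all add: complex_norm_square[symmetric])

lemma cinner_Cauchy_Schwarz:
  assumes "dim_vec w = dim_vec u"
  shows "cmod (cinner u w) \<le> vnorm u * vnorm w"
proof -
  have "cmod (cinner u w) \<le> (\<Sum>i<dim_vec u. cmod (u$i * cnj (w$i)))"
    unfolding cinner_def by (rule norm_sum)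
  also have "\<dots> = (\<Sum>i<dim_vec u. \<bar>cmod (u$i)\<bar> * \<bar>cmod (w$i)\<bar>)"
    by (simp add: norm_mult)
  also have "\<dots> \<le> L2_set (\<lambda>i. cmod (u$i)) {..<dim_vec u} * L2_set (\<lambda>i. cmod (w$i)) {..<dim_vec u}"
    by (rule L2_set_mult_ineq)
  also have "\<dots> = vnorm u * vnorm w" using assms by (simp add: vnorm_L2)
  finally show ?thesis .
qed

lemma cinner_add_left:
  "u \<in> carrier_vec n \<Longrightarrow> w \<in> carrier_vec n \<Longrightarrow> cinner (u + w) z = cinner u z + cinner w z"
  by (simp add: cinner_def sum.distrib algebra_simps)

lemma cinner_diff_left:
  "u \<in> carrier_vec n \<Longrightarrow> w \<in> carrier_vec n \<Longrightarrow> cinner (u - w) z = cinner u z - cinner w z"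
  by (simp add: cinner_def sum_subtractf algebra_simps)

lemma cinner_diff_right:
  "u \<in> carrier_vec n \<Longrightarrow> w \<in> carrier_vec n \<Longrightarrow> z \<in> carrier_vec n \<Longrightarrow>
   cinner u (w - z) = cinner u w - cinner u z"
  by (simp add: cinner_def sum_subtractf algebra_simps)

lemma cinner_smult_left: "cinner (k \<cdot>\<^sub>v u) w = k * cinner u w"
  by (simp add: cinner_def sum_distrib_left algebra_simps)

lemma cinner_smult_right:
  "u \<in> carrier_vec n \<Longrightarrow> w \<in> carrier_vec n \<Longrightarrow> cinner u (k \<cdot>\<^sub>v w) = cnj k * cinner u w"
  by (simp add: cinner_def sum_distrib_left algebra_simps)

lemma mult_mat_vec_index_sum:
  "i < dim_row B \<Longrightarrow> dim_vec v = dim_col B \<Longrightarrow> (B *\<^sub>v v) $ i = (\<Sum>j<dim_col B. B$$(i,j) * v$j)"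
  by (simp add: scalar_prod_def atLeast0LessThan)

lemma smult_mat_mult_vec:
  "B \<in> carrier_mat n n \<Longrightarrow> v \<in> carrier_vec n \<Longrightarrow> (k \<cdot>\<^sub>m B) *\<^sub>v v = k \<cdot>\<^sub>v (B *\<^sub>v v)"
  by (intro eq_vecI)
    (auto simp: mult_mat_vec_index_sum sum_distrib_left mult.assoc simp del: index_mult_mat_vec)

text \<open>A crude bound for the operator norm, enough to make all suprema below finite.\<close>

definition entry_norm :: "complex mat \<Rightarrow> real" where
  "entry_norm B = (\<Sum>i<dim_row B. \<Sum>j<dim_col B. cmod (B$$(i,j)))"

lemma entry_norm_nonneg [simp]: "entry_norm B \<ge> 0"
  unfolding entry_norm_def by (simp add: sum_nonneg)

lemma vnorm_mult_mat_vec_le: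
  assumes "dim_vec v = dim_col B"
  shows "vnorm (B *\<^sub>v v) \<le> entry_norm B * vnorm v"
proof -
  have "vnorm (B *\<^sub>v v) \<le> (\<Sum>i<dim_row B. cmod ((B *\<^sub>v v)$i))"
    unfolding vnorm_L2 by (rule order_trans[OF L2_set_le_sum]) simp_all
  also have "\<dots> \<le> (\<Sum>i<dim_row B. \<Sum>j<dim_col B. cmod (B$$(i,j)) * vnorm v)"
  proof (rule sum_mono)
    fix i assume i: "i \<in> {..<dim_row B}"
    have entry: "cmod (v$j) \<le> vnorm v" if "j < dim_col B" for j
      unfolding vnorm_L2 by (rule member_le_L2_set) (use that assms in auto)
    have "cmod ((B *\<^sub>v v)$i) = cmod (\<Sum>j<dim_col B. B$$(i,j) * v$j)"
      using i assms by (simp add: mult_mat_vec_index_sum del: index_mult_mat_vec)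
    also have "\<dots> \<le> (\<Sum>j<dim_col B. cmod (B$$(i,j)) * cmod (v$j))"
      by (rule order_trans[OF norm_sum]) (simp add: norm_mult)
    also have "\<dots> \<le> (\<Sum>j<dim_col B. cmod (B$$(i,j)) * vnorm v)"
      by (rule sum_mono) (use entry in \<open>auto intro!: mult_left_mono\<close>)
    finally show "cmod ((B *\<^sub>v v)$i) \<le> (\<Sum>j<dim_col B. cmod (B$$(i,j)) * vnorm v)" .
  qed
  also have "\<dots> = entry_norm B * vnorm v"
    unfolding entry_norm_def by (simp add: sum_distrib_right)
  finally show ?thesis .
qed

definition adjoint_mat :: "complex mat \<Rightarrow> complex mat" where
  "adjoint_mat B = mat (dim_col B) (dim_row B) (\<lambda>(i,j). cnj (B$$(j,i)))"

lemma adjoint_mat_carrier [simp]: "B \<in> carrier_mat n m \<Longrightarrow> adjoint_mat B \<in> carrier_mat m n"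
  unfolding adjoint_mat_def by auto

lemma cinner_adjoint_mat:
  assumes B: "B \<in> carrier_mat d d" and u: "u \<in> carrier_vec d" and w: "w \<in> carrier_vec d"
  shows "cinner (adjoint_mat B *\<^sub>v u) w = cinner u (B *\<^sub>v w)"
proof -
  have "cinner (adjoint_mat B *\<^sub>v u) w = (\<Sum>i<d. \<Sum>j<d. u$j * cnj (B$$(j,i) * w$i))"
    using B u
    by (simp add: cinner_def mult_mat_vec_index_sum adjoint_mat_def sum_distrib_left
        sum_distrib_right mult_ac del: index_mult_mat_vec)
  also have "\<dots> = (\<Sum>j<d. \<Sum>i<d. u$j * cnj (B$$(j,i) * w$i))"
    by (rule sum.swap)
  also have "\<dots> = cinner u (B *\<^sub>v w)"
    using B u w
    by (simp add: cinner_def mult_mat_vec_index_sum sum_distrib_left del: index_mult_mat_vec)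
  finally show ?thesis .
qed

definition qform :: "complex mat \<Rightarrow> complex vec \<Rightarrow> complex" where
  "qform B v = cinner (B *\<^sub>v v) v"

lemma qform_expand:
  "B \<in> carrier_mat n n \<Longrightarrow> v \<in> carrier_vec n \<Longrightarrow>
   qform B v = (\<Sum>i<n. (\<Sum>j<n. B$$(i,j) * v$j) * cnj (v$i))"
  unfolding qform_def cinner_def by (simp add: mult_mat_vec_index_sum del: index_mult_mat_vec)

lemma vnorm_mult_mat_vec_expand:
  "B \<in> carrier_mat n n \<Longrightarrow> v \<in> carrier_vec n \<Longrightarrow>
   vnorm (B *\<^sub>v v) = sqrt (\<Sum>i<n. (cmod (\<Sum>j<n. B$$(i,j) * v$j))\<^sup>2)"
  unfolding vnorm_def by (simp add: mult_mat_vec_index_sum del: index_mult_mat_vec)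

lemma qform_bound:
  assumes "B \<in> carrier_mat n n" "v \<in> carrier_vec n"
  shows "cmod (qform B v) \<le> entry_norm B * (vnorm v)\<^sup>2"
proof -
  have "cmod (qform B v) \<le> vnorm (B *\<^sub>v v) * vnorm v"
    unfolding qform_def by (rule cinner_Cauchy_Schwarz) (use assms in auto)
  also have "\<dots> \<le> entry_norm B * vnorm v * vnorm v"
    by (rule mult_right_mono) (use assms vnorm_mult_mat_vec_le in auto)
  finally show ?thesis by (simp add: power2_eq_square mult.assoc)
qed

lemma qform_scale:
  "B \<in> carrier_mat n n \<Longrightarrow> v \<in> carrier_vec n \<Longrightarrow>
   qform B (complex_of_real t \<cdot>\<^sub>v v) = complex_of_real (t\<^sup>2) * qform B v"
  unfolding qform_def
  by (simp add: mult_mat_vec cinner_smult_left cinner_smult_right[of _ n] power2_eq_square)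

lemma Re_qform_le_on_unit_sphere:
  assumes B: "B \<in> carrier_mat n n"
    and unit: "\<And>u. u \<in> carrier_vec n \<Longrightarrow> vnorm u = 1 \<Longrightarrow> Re (qform B u) \<le> L"
    and v: "v \<in> carrier_vec n"
  shows "Re (qform B v) \<le> L * (vnorm v)\<^sup>2"
proof (cases "vnorm v = 0")
  case True
  hence "qform B v = 0"
    using v B vnorm_eq_0_iff by (auto simp: qform_def cinner_def intro!: sum.neutral)
  thus ?thesis using True by simp
next
  case False
  define u where "u = complex_of_real (1 / vnorm v) \<cdot>\<^sub>v v"
  have u: "u \<in> carrier_vec n" "vnorm u = 1"
    using vnorm_unit_scale[OF False] v by (auto simp: u_def)
  have "v = complex_of_real (vnorm v) \<cdot>\<^sub>v u"
    using False by (simp add: u_def smult_smult_assoc)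
  hence "qform B v = complex_of_real ((vnorm v)\<^sup>2) * qform B u"
    using qform_scale[OF B u(1)] by metis
  hence "Re (qform B v) = (vnorm v)\<^sup>2 * Re (qform B u)" by simp
  also have "\<dots> \<le> (vnorm v)\<^sup>2 * L" using unit[OF u] by (simp add: mult_left_mono)
  finally show ?thesis by (simp add: mult.commute)
qed

lemma bdd_above_Re_qform_unit_sphere:
  assumes B: "B \<in> carrier_mat n n"
  shows "bdd_above {Re (qform B w) | w. w \<in> carrier_vec n \<and> vnorm w = 1}"
proof -
  have "Re (qform B w) \<le> entry_norm B" if "w \<in> carrier_vec n" "vnorm w = 1" for w
    using complex_Re_le_cmod[of "qform B w"] qform_bound[OF B that(1)] that(2) by simp
  thus ?thesis unfolding bdd_above_def by blast
qed

lemma qform_adjoint_mult: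
  assumes "C \<in> carrier_mat d d" "v \<in> carrier_vec d"
  shows "qform (adjoint_mat C * C) v = complex_of_real ((vnorm (C *\<^sub>v v))\<^sup>2)"
proof -
  have "qform (adjoint_mat C * C) v = cinner (adjoint_mat C *\<^sub>v (C *\<^sub>v v)) v"
    using assms by (simp add: qform_def assoc_mult_mat_vec[of _ d d _ d])
  also have "\<dots> = cinner (C *\<^sub>v v) (C *\<^sub>v v)"
    using assms by (intro cinner_adjoint_mat) auto
  finally show ?thesis by (simp add: cinner_self)
qed

text \<open>For a positive semidefinite Q this is the matrix form of \<open>\<parallel>Q w\<parallel>\<^sup>2 \<le> \<parallel>Q\<parallel> \<langle>Q w, w\<rangle>\<close>;
  it follows from positivity at the test vector \<open>w - t Q w\<close> with \<open>t = 1 / (entry_norm Q + 1)\<close>.\<close>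

lemma vnorm_mult_square_le_Re_qform:
  assumes Q: "Q \<in> carrier_mat d d" and herm: "adjoint_mat Q = Q"
    and psd: "\<And>w. w \<in> carrier_vec d \<Longrightarrow> Re (qform Q w) \<ge> 0"
    and w: "w \<in> carrier_vec d"
  shows "(vnorm (Q *\<^sub>v w))\<^sup>2 \<le> (entry_norm Q + 1) * Re (qform Q w)"
proof -
  define K where "K = entry_norm Q + 1"
  have K: "K > 0" by (simp add: K_def add_nonneg_pos)
  define g where "g = Q *\<^sub>v w"
  have g: "g \<in> carrier_vec d" and Qg: "Q *\<^sub>v g \<in> carrier_vec d" using Q w by (auto simp: g_def)
  define t :: real where "t = 1 / K"
  define w' where "w' = w - complex_of_real t \<cdot>\<^sub>v g"
  have w': "w' \<in> carrier_vec d" using w g by (simp add: w'_def)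
  have Qw': "Q *\<^sub>v w' = g - complex_of_real t \<cdot>\<^sub>v (Q *\<^sub>v g)"
    unfolding w'_def g_def using Q w g
    by (simp add: mult_minus_distrib_mat_vec[of _ d d] mult_mat_vec[of _ d d])
  have Qg_w: "cinner (Q *\<^sub>v g) w = cinner g g"
    using cinner_adjoint_mat[OF Q g w] herm by (simp add: g_def)
  have "qform Q w' = cinner g w - complex_of_real t * cinner g g
      - complex_of_real t * cinner (Q *\<^sub>v g) w
      + complex_of_real t * complex_of_real t * cinner (Q *\<^sub>v g) g"
    unfolding qform_def Qw' using g w Qg
    by (simp add: w'_def cinner_diff_left[of _ d] cinner_diff_right[of _ d] cinner_smult_left
        cinner_smult_right[of _ d] algebra_simps)
  also have "\<dots> = qform Q w - 2 * complex_of_real t * complex_of_real ((vnorm g)\<^sup>2)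
      + complex_of_real t * complex_of_real t * qform Q g"
    using Qg_w by (simp add: qform_def g_def cinner_self algebra_simps)
  finally have expand: "Re (qform Q w') = Re (qform Q w) - 2 * t * (vnorm g)\<^sup>2 + t * t * Re (qform Q g)"
    by simp
  have "Re (qform Q g) \<le> K * (vnorm g)\<^sup>2"
    using complex_Re_le_cmod[of "qform Q g"] qform_bound[OF Q g]
    by (simp add: K_def distrib_right add_increasing2)
  hence "t * t * Re (qform Q g) \<le> t * (vnorm g)\<^sup>2"
    using K mult_left_mono[of _ _ "t * t"] by (simp add: t_def field_simps)
  hence "t * (vnorm g)\<^sup>2 \<le> Re (qform Q w)" using psd[OF w'] expand by linarith
  thus ?thesis using K by (simp add: t_def g_def K_def field_simps)
qed

lemma Re_qform_bounded_below:
  assumes Q: "Q \<in> carrier_mat d d" and R: "R \<in> carrier_mat d d" and inv: "R * Q = 1\<^sub>m d"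
    and herm: "adjoint_mat Q = Q"
    and psd: "\<And>w. w \<in> carrier_vec d \<Longrightarrow> Re (qform Q w) \<ge> 0"
  shows "\<exists>\<eta>>0. \<forall>w\<in>carrier_vec d. vnorm w = 1 \<longrightarrow> \<eta> \<le> Re (qform Q w)"
proof -
  define K where "K = entry_norm Q + 1"
  define KR where "KR = entry_norm R + 1"
  have K: "K > 0" and KR: "KR > 0" by (simp_all add: K_def KR_def add_nonneg_pos)
  have "1 / (KR\<^sup>2 * K) \<le> Re (qform Q w)" if w: "w \<in> carrier_vec d" "vnorm w = 1" for w
  proof -
    have "w = R *\<^sub>v (Q *\<^sub>v w)"
      using inv w Q R by (simp flip: assoc_mult_mat_vec[of _ d d _ d])
    hence "1 \<le> entry_norm R * vnorm (Q *\<^sub>v w)"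
      using vnorm_mult_mat_vec_le[of "Q *\<^sub>v w" R] w Q R by simp
    also have "\<dots> \<le> KR * vnorm (Q *\<^sub>v w)" by (simp add: KR_def mult_right_mono)
    finally have "1 \<le> (KR * vnorm (Q *\<^sub>v w))\<^sup>2" by (simp add: one_le_power)
    also have "\<dots> \<le> KR\<^sup>2 * (K * Re (qform Q w))"
      using vnorm_mult_square_le_Re_qform[OF Q herm psd w(1)]
      by (simp add: K_def power_mult_distrib mult_left_mono)
    finally show ?thesis using K KR by (simp add: field_simps)
  qed
  moreover have "1 / (KR\<^sup>2 * K) > 0" using K KR by simp
  ultimately show ?thesis by blast
qed

lemma opnorm_bdd_above:
  assumes "B \<in> carrier_mat n n"
  shows "bdd_above {vnorm (B *\<^sub>v v) | v. v \<in> carrier_vec n \<and> vnorm v \<le> 1}"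
proof -
  have "vnorm (B *\<^sub>v v) \<le> entry_norm B" if "v \<in> carrier_vec n" "vnorm v \<le> 1" for v
    using vnorm_mult_mat_vec_le[of v B] assms that
    by (auto intro: order_trans[OF _ mult_left_le])
  thus ?thesis unfolding bdd_above_def by auto
qed

lemma vnorm_mult_le_opnorm:
  "B \<in> carrier_mat n n \<Longrightarrow> v \<in> carrier_vec n \<Longrightarrow> vnorm v \<le> 1 \<Longrightarrow> vnorm (B *\<^sub>v v) \<le> opnorm B"
  unfolding opnorm_def by (rule cSup_upper) (auto intro: opnorm_bdd_above)

lemma opnorm_le:
  "B \<in> carrier_mat n n \<Longrightarrow> (\<And>v. v \<in> carrier_vec n \<Longrightarrow> vnorm v \<le> 1 \<Longrightarrow> vnorm (B *\<^sub>v v) \<le> s) \<Longrightarrow>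
   opnorm B \<le> s"
  unfolding opnorm_def by (rule cSup_least) (auto intro!: exI[of _ "0\<^sub>v n"] simp: vnorm_def)

lemma opnorm_nonneg:
  "B \<in> carrier_mat n n \<Longrightarrow> opnorm B \<ge> 0"
  using vnorm_mult_le_opnorm[of B n "0\<^sub>v n"] by (simp add: vnorm_def order_trans[OF vnorm_nonneg])

lemma Re_qform_div_le_opnorm:
  assumes B: "B \<in> carrier_mat n n" and u: "u \<in> carrier_vec n" and nz: "vnorm u \<noteq> 0"
  shows "Re (qform B u) / (vnorm u)\<^sup>2 \<le> opnorm B"
proof -
  define u' where "u' = complex_of_real (1 / vnorm u) \<cdot>\<^sub>v u"
  have u': "u' \<in> carrier_vec n" "vnorm u' = 1" using vnorm_unit_scale[OF nz] u by (auto simp: u'_def)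
  have "qform B u' = complex_of_real ((1 / vnorm u)\<^sup>2) * qform B u"
    unfolding u'_def by (rule qform_scale[OF B u])
  hence "Re (qform B u) / (vnorm u)\<^sup>2 = Re (qform B u')" by (simp add: power_divide)
  also have "\<dots> \<le> vnorm (B *\<^sub>v u') * vnorm u'"
    unfolding qform_def
    by (rule order_trans[OF complex_Re_le_cmod cinner_Cauchy_Schwarz]) (use B u' in auto)
  also have "\<dots> \<le> opnorm B" using vnorm_mult_le_opnorm[OF B u'(1)] u'(2) by simp
  finally show ?thesis .
qed

lemma opnorm_adjoint_mult_le:
  assumes C: "C \<in> carrier_mat d d" and s: "s \<ge> 0"
    and unit: "\<And>u. u \<in> carrier_vec d \<Longrightarrow> vnorm u = 1 \<Longrightarrow> Re (qform (adjoint_mat C * C) u) \<le> s"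
  shows "opnorm (adjoint_mat C * C) \<le> s"
proof (rule opnorm_le)
  show B: "adjoint_mat C * C \<in> carrier_mat d d" using C by (metis adjoint_mat_carrier mult_carrier_mat)
  have C_le: "vnorm (C *\<^sub>v v) \<le> sqrt s * vnorm v" if v: "v \<in> carrier_vec d" for v
  proof -
    have "(vnorm (C *\<^sub>v v))\<^sup>2 \<le> s * (vnorm v)\<^sup>2"
      using Re_qform_le_on_unit_sphere[OF B unit v] qform_adjoint_mult[OF C v] by simp
    hence "vnorm (C *\<^sub>v v) \<le> sqrt (s * (vnorm v)\<^sup>2)" by (rule real_le_rsqrt)
    thus ?thesis by (simp add: real_sqrt_mult)
  qed
  fix v assume v: "v \<in> carrier_vec d" "vnorm v \<le> 1"
  define w where "w = adjoint_mat C * C *\<^sub>v v"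
  have w: "w \<in> carrier_vec d" unfolding w_def by (rule mult_mat_vec_carrier[OF B v(1)])
  have "(vnorm w)\<^sup>2 = Re (cinner (adjoint_mat C *\<^sub>v (C *\<^sub>v v)) w)"
    using v C by (simp add: cinner_self w_def assoc_mult_mat_vec[of _ d d _ d])
  also have "\<dots> = Re (cinner (C *\<^sub>v v) (C *\<^sub>v w))"
    using C v w by (simp add: cinner_adjoint_mat)
  also have "\<dots> \<le> vnorm (C *\<^sub>v v) * vnorm (C *\<^sub>v w)"
    by (rule order_trans[OF complex_Re_le_cmod cinner_Cauchy_Schwarz]) (use C v w in auto)
  also have "\<dots> \<le> (sqrt s * vnorm v) * (sqrt s * vnorm w)"
    by (rule mult_mono) (use C_le v w s in auto)
  also have "\<dots> \<le> s * vnorm w"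
    using s v mult_right_mono[of "vnorm v" 1 "s * vnorm w"] by (simp add: algebra_simps)
  finally have "vnorm w * vnorm w \<le> s * vnorm w" by (simp add: power2_eq_square)
  thus "vnorm (adjoint_mat C * C *\<^sub>v v) \<le> s"
    using s unfolding w_def[symmetric]
    by (cases "vnorm w = 0") (auto dest: mult_right_le_imp_le)
qed

lemma exists_unit_Re_qform_gt:
  assumes C: "C \<in> carrier_mat d d" and c: "c > 0" "c \<le> opnorm (adjoint_mat C * C)" and \<delta>: "\<delta> > 0"
  shows "\<exists>v\<in>carrier_vec d. vnorm v = 1 \<and> c - \<delta> < Re (qform (adjoint_mat C * C) v)"
proof (rule ccontr)
  assume "\<not> ?thesis"
  hence "opnorm (adjoint_mat C * C) \<le> max (c - \<delta>) 0"
    by (intro opnorm_adjoint_mult_le[OF C]) force+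
  thus False using c \<delta> by linarith
qed

section \<open>Abstract C*-algebras\<close>

locale unital_cstar =
  fixes A :: "'a cstar_alg"
  assumes cstar_algebra: "cstar_algebra A"
begin

abbreviation plus_A (infixl "\<boxplus>" 65) where "plus_A \<equiv> cadd A"
abbreviation times_A (infixl "\<boxtimes>" 70) where "times_A \<equiv> cmul A"
abbreviation minus_A (infixl "\<boxminus>" 65) where "minus_A \<equiv> cminus A"
abbreviation scale_A (infixr "\<cdot>\<^sub>A" 75) where "scale_A \<equiv> csmul A"
abbreviation zero_A ("\<zero>\<^sub>A") where "zero_A \<equiv> czero A"
abbreviation one_A ("\<one>\<^sub>A") where "one_A \<equiv> cone A"
abbreviation star_A ("_\<^sup>\<star>" [1000] 1000) where "star_A \<equiv> cstar A"
abbreviation norm_A ("\<parallel>_\<parallel>\<^sub>A") where "norm_A \<equiv> cnorm A"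

lemmas A_axioms = cstar_algebra[unfolded cstar_algebra_def]

lemma A_add_assoc: "(x \<boxplus> y) \<boxplus> z = x \<boxplus> (y \<boxplus> z)" using A_axioms by metis
lemma A_add_comm: "x \<boxplus> y = y \<boxplus> x" using A_axioms by metis
lemma A_add_0: "x \<boxplus> \<zero>\<^sub>A = x" using A_axioms by metis
lemma A_add_neg: "x \<boxplus> (-1) \<cdot>\<^sub>A x = \<zero>\<^sub>A" using A_axioms by metis
lemma A_smul_1: "1 \<cdot>\<^sub>A x = x" using A_axioms by metis
lemma A_smul_smul: "(\<alpha> * \<beta>) \<cdot>\<^sub>A x = \<alpha> \<cdot>\<^sub>A (\<beta> \<cdot>\<^sub>A x)" using A_axioms by metis
lemma A_smul_add_left: "(\<alpha> + \<beta>) \<cdot>\<^sub>A x = \<alpha> \<cdot>\<^sub>A x \<boxplus> \<beta> \<cdot>\<^sub>A x" using A_axioms by metis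
lemma A_smul_add_right: "\<alpha> \<cdot>\<^sub>A (x \<boxplus> y) = \<alpha> \<cdot>\<^sub>A x \<boxplus> \<alpha> \<cdot>\<^sub>A y" using A_axioms by metis
lemma A_distrib_left: "x \<boxtimes> (y \<boxplus> z) = x \<boxtimes> y \<boxplus> x \<boxtimes> z" using A_axioms by metis
lemma A_distrib_right: "(x \<boxplus> y) \<boxtimes> z = x \<boxtimes> z \<boxplus> y \<boxtimes> z" using A_axioms by metis
lemma A_mult_smul_left: "(\<alpha> \<cdot>\<^sub>A x) \<boxtimes> y = \<alpha> \<cdot>\<^sub>A (x \<boxtimes> y)" using A_axioms by metis
lemma A_mult_smul_right: "x \<boxtimes> (\<alpha> \<cdot>\<^sub>A y) = \<alpha> \<cdot>\<^sub>A (x \<boxtimes> y)" using A_axioms by metis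
lemma A_one_mult: "\<one>\<^sub>A \<boxtimes> x = x" using A_axioms by metis
lemma A_mult_one: "x \<boxtimes> \<one>\<^sub>A = x" using A_axioms by metis
lemma A_star_star: "x\<^sup>\<star>\<^sup>\<star> = x" using A_axioms by metis
lemma A_star_add: "(x \<boxplus> y)\<^sup>\<star> = x\<^sup>\<star> \<boxplus> y\<^sup>\<star>" using A_axioms by metis
lemma A_star_smul: "(\<alpha> \<cdot>\<^sub>A x)\<^sup>\<star> = cnj \<alpha> \<cdot>\<^sub>A x\<^sup>\<star>" using A_axioms by metis
lemma A_star_mult: "(x \<boxtimes> y)\<^sup>\<star> = y\<^sup>\<star> \<boxtimes> x\<^sup>\<star>" using A_axioms by metis
lemma A_norm_eq_0_iff: "\<parallel>x\<parallel>\<^sub>A = 0 \<longleftrightarrow> x = \<zero>\<^sub>A" using A_axioms by metis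
lemma A_norm_triangle: "\<parallel>x \<boxplus> y\<parallel>\<^sub>A \<le> \<parallel>x\<parallel>\<^sub>A + \<parallel>y\<parallel>\<^sub>A" using A_axioms by metis
lemma A_norm_smul: "\<parallel>\<alpha> \<cdot>\<^sub>A x\<parallel>\<^sub>A = cmod \<alpha> * \<parallel>x\<parallel>\<^sub>A" using A_axioms by metis
lemma A_norm_mult: "\<parallel>x \<boxtimes> y\<parallel>\<^sub>A \<le> \<parallel>x\<parallel>\<^sub>A * \<parallel>y\<parallel>\<^sub>A" using A_axioms by metis
lemma A_norm_cstar: "\<parallel>x\<^sup>\<star> \<boxtimes> x\<parallel>\<^sub>A = \<parallel>x\<parallel>\<^sub>A\<^sup>2" using A_axioms by metis
lemma A_complete:
  "\<forall>e>0. \<exists>N. \<forall>m\<ge>N. \<forall>n\<ge>N. \<parallel>s m \<boxminus> s n\<parallel>\<^sub>A < e \<Longrightarrow> \<exists>l. (\<lambda>n. \<parallel>s n \<boxminus> l\<parallel>\<^sub>A) \<longlonglongrightarrow> 0"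
  using A_axioms by metis

lemma A_0_add: "\<zero>\<^sub>A \<boxplus> x = x"
  by (simp only: A_add_comm[of "\<zero>\<^sub>A" x] A_add_0)

lemma A_add_eq_left_imp_zero: "y \<boxplus> z = y \<Longrightarrow> z = \<zero>\<^sub>A"
  by (metis A_0_add A_add_assoc A_add_comm A_add_neg)

lemma A_smul_0 [simp]: "0 \<cdot>\<^sub>A x = \<zero>\<^sub>A"
  by (rule A_add_eq_left_imp_zero[of "0 \<cdot>\<^sub>A x"]) (simp flip: A_smul_add_left)

lemma A_mult_zero [simp]: "x \<boxtimes> \<zero>\<^sub>A = \<zero>\<^sub>A"
  by (metis A_mult_smul_right A_smul_0)

lemma A_zero_mult [simp]: "\<zero>\<^sub>A \<boxtimes> x = \<zero>\<^sub>A"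
  by (metis A_mult_smul_left A_smul_0)

lemma A_star_zero [simp]: "\<zero>\<^sub>A\<^sup>\<star> = \<zero>\<^sub>A"
  by (metis A_star_smul A_smul_0 complex_cnj_zero)

lemma A_norm_zero [simp]: "\<parallel>\<zero>\<^sub>A\<parallel>\<^sub>A = 0"
  using A_norm_eq_0_iff by blast

lemma A_norm_nonneg [simp]: "\<parallel>x\<parallel>\<^sub>A \<ge> 0"
proof -
  have "0 = \<parallel>x \<boxplus> (-1) \<cdot>\<^sub>A x\<parallel>\<^sub>A" by (simp add: A_add_neg)
  also have "\<dots> \<le> 2 * \<parallel>x\<parallel>\<^sub>A" using A_norm_triangle[of x "(-1) \<cdot>\<^sub>A x"] by (simp add: A_norm_smul)
  finally show ?thesis by simp
qed

lemma A_star_one: "\<one>\<^sub>A\<^sup>\<star> = \<one>\<^sub>A"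
  by (metis A_mult_one A_star_mult A_star_star)

lemma A_norm_one: "\<parallel>\<one>\<^sub>A\<parallel>\<^sub>A \<le> 1"
proof -
  have "\<parallel>\<one>\<^sub>A\<parallel>\<^sub>A\<^sup>2 = \<parallel>\<one>\<^sub>A\<parallel>\<^sub>A" using A_norm_cstar[of "\<one>\<^sub>A"] by (simp add: A_mult_one A_star_one)
  hence "\<parallel>\<one>\<^sub>A\<parallel>\<^sub>A = 0 \<or> \<parallel>\<one>\<^sub>A\<parallel>\<^sub>A = 1" by (simp add: power2_eq_square)
  thus ?thesis by auto
qed

lemma A_minus_def: "x \<boxminus> y = x \<boxplus> (-1) \<cdot>\<^sub>A y"
  by (simp add: cminus_def)

lemma A_minus_self [simp]: "x \<boxminus> x = \<zero>\<^sub>A"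
  by (simp add: A_minus_def A_add_neg)

lemma A_minus_eq_0: "x \<boxminus> y = \<zero>\<^sub>A \<Longrightarrow> x = y"
  by (metis A_0_add A_add_assoc A_add_comm A_add_neg A_minus_def)

lemma A_norm_minus_commute: "\<parallel>y \<boxminus> x\<parallel>\<^sub>A = \<parallel>x \<boxminus> y\<parallel>\<^sub>A"
proof -
  have "y \<boxminus> x = (-1) \<cdot>\<^sub>A (x \<boxminus> y)"
    by (simp add: A_minus_def A_smul_add_right A_smul_1 A_add_comm flip: A_smul_smul)
  thus ?thesis by (simp add: A_norm_smul)
qed

lemma A_minus_split: "x \<boxminus> z = (x \<boxminus> y) \<boxplus> (y \<boxminus> z)"
  by (metis A_add_0 A_add_assoc A_add_comm A_add_neg A_minus_def)

lemma A_add_minus_self: "(x \<boxplus> y) \<boxminus> x = y"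
  by (simp only: A_minus_def A_add_comm[of x y] A_add_assoc A_add_neg A_add_0)

lemma A_minus_minus_self: "(u \<boxminus> p) \<boxminus> u = (-1) \<cdot>\<^sub>A p"
  by (simp only: A_minus_def A_add_comm[of u "(-1) \<cdot>\<^sub>A p"] A_add_assoc A_add_neg A_add_0)

lemma A_mult_minus_left: "z \<boxtimes> (x \<boxminus> y) = z \<boxtimes> x \<boxminus> z \<boxtimes> y"
  by (simp add: A_minus_def A_distrib_left A_mult_smul_right)

lemma A_mult_minus_right: "(x \<boxminus> y) \<boxtimes> z = x \<boxtimes> z \<boxminus> y \<boxtimes> z"
  by (simp add: A_minus_def A_distrib_right A_mult_smul_left)

lemma A_star_minus: "(x \<boxminus> y)\<^sup>\<star> = x\<^sup>\<star> \<boxminus> y\<^sup>\<star>"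
  by (simp add: A_minus_def A_star_add A_star_smul)

end

primrec A_power :: "'a cstar_alg \<Rightarrow> 'a \<Rightarrow> nat \<Rightarrow> 'a" where
  "A_power A x 0 = cone A"
| "A_power A x (Suc n) = cmul A x (A_power A x n)"

primrec A_sum :: "'a cstar_alg \<Rightarrow> (nat \<Rightarrow> 'a) \<Rightarrow> nat \<Rightarrow> 'a" where
  "A_sum A f 0 = czero A"
| "A_sum A f (Suc n) = cadd A (A_sum A f n) (f n)"

context unital_cstar
begin

lemma A_norm_sum_le: "\<parallel>A_sum A f n\<parallel>\<^sub>A \<le> (\<Sum>k<n. \<parallel>f k\<parallel>\<^sub>A)"
  by (induction n) (auto intro: order_trans[OF A_norm_triangle])

lemma A_sum_split: "A_sum A f (n + j) = A_sum A f n \<boxplus> A_sum A (\<lambda>k. f (n + k)) j"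
  by (induction j) (simp_all add: A_add_0 A_add_assoc)

lemma A_norm_power_le: "\<parallel>A_power A x k\<parallel>\<^sub>A \<le> \<parallel>x\<parallel>\<^sub>A ^ k"
proof (induction k)
  case 0 thus ?case using A_norm_one by simp
next
  case (Suc k)
  have "\<parallel>A_power A x (Suc k)\<parallel>\<^sub>A \<le> \<parallel>x\<parallel>\<^sub>A * \<parallel>A_power A x k\<parallel>\<^sub>A" using A_norm_mult by simp
  also have "\<dots> \<le> \<parallel>x\<parallel>\<^sub>A * \<parallel>x\<parallel>\<^sub>A ^ k" using Suc by (simp add: mult_left_mono)
  finally show ?case by simp
qed

lemma neumann_telescope:
  "(\<one>\<^sub>A \<boxminus> x) \<boxtimes> A_sum A (A_power A x) n = \<one>\<^sub>A \<boxminus> A_power A x n"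
proof (induction n)
  case 0 show ?case by simp
next
  case (Suc n)
  have "(\<one>\<^sub>A \<boxminus> x) \<boxtimes> A_sum A (A_power A x) (Suc n)
      = (\<one>\<^sub>A \<boxminus> A_power A x n) \<boxplus> (A_power A x n \<boxminus> x \<boxtimes> A_power A x n)"
    by (simp only: A_sum.simps A_distrib_left Suc.IH) (simp only: A_mult_minus_right A_one_mult)
  also have "\<dots> = \<one>\<^sub>A \<boxminus> A_power A x (Suc n)" by (simp flip: A_minus_split)
  finally show ?case .
qed

lemma geometric_tail_le:
  fixes q :: real assumes "0 \<le> q" "q < 1"
  shows "(\<Sum>k<j. q^(n+k)) \<le> q^n / (1 - q)"
proof -
  have "(\<Sum>k<j. q^(n+k)) = q^n * ((1 - q^j) / (1 - q))"
    using assms by (simp add: power_add sum_gp_strict flip: sum_distrib_left)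
  also have "\<dots> \<le> q^n * (1 / (1 - q))"
    using assms by (intro mult_left_mono divide_right_mono) auto
  finally show ?thesis by simp
qed

lemma Cauchy_A_sum_power:
  assumes "\<parallel>x\<parallel>\<^sub>A < 1"
  shows "\<forall>e>0. \<exists>N. \<forall>m\<ge>N. \<forall>n\<ge>N. \<parallel>A_sum A (A_power A x) m \<boxminus> A_sum A (A_power A x) n\<parallel>\<^sub>A < e"
proof -
  define q where "q = \<parallel>x\<parallel>\<^sub>A"
  have q: "0 \<le> q" "q < 1" using assms by (auto simp: q_def)
  define s where "s = A_sum A (A_power A x)"
  have tail: "\<parallel>s m \<boxminus> s n\<parallel>\<^sub>A \<le> q^n / (1 - q)" if "n \<le> m" for m n
  proof -
    obtain j where m: "m = n + j" using \<open>n \<le> m\<close> le_Suc_ex by blast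
    have "\<parallel>s m \<boxminus> s n\<parallel>\<^sub>A \<le> (\<Sum>k<j. \<parallel>A_power A x (n + k)\<parallel>\<^sub>A)"
      using A_norm_sum_le unfolding s_def m A_sum_split A_add_minus_self .
    also have "\<dots> \<le> (\<Sum>k<j. q^(n+k))"
      by (rule sum_mono) (simp add: A_norm_power_le q_def)
    also have "\<dots> \<le> q^n / (1 - q)" using geometric_tail_le[OF q] .
    finally show ?thesis .
  qed
  have lim: "(\<lambda>n. q^n / (1 - q)) \<longlonglongrightarrow> 0"
    using q by (intro tendsto_divide_zero LIMSEQ_realpow_zero) auto
  have close: "\<parallel>s m \<boxminus> s n\<parallel>\<^sub>A < e"
    if "\<forall>n\<ge>N. q^n / (1 - q) < e" "m \<ge> N" "n \<ge> N" for e N m n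
    using that tail[of m n] tail[of n m] A_norm_minus_commute[of "s m" "s n"]
    by (cases "n \<le> m") fastforce+
  show ?thesis unfolding s_def[symmetric]
  proof (intro allI impI)
    fix e :: real assume "e > 0"
    then obtain N where "\<forall>n\<ge>N. q^n / (1 - q) < e"
      using order_tendstoD(2)[OF lim] unfolding eventually_sequentially by blast
    thus "\<exists>N. \<forall>m\<ge>N. \<forall>n\<ge>N. \<parallel>s m \<boxminus> s n\<parallel>\<^sub>A < e" using close by blast
  qed
qed

lemma one_minus_right_invertible:
  assumes "\<parallel>x\<parallel>\<^sub>A < 1"
  shows "\<exists>r. (\<one>\<^sub>A \<boxminus> x) \<boxtimes> r = \<one>\<^sub>A"
proof -
  define s where "s = A_sum A (A_power A x)"
  obtain r where r: "(\<lambda>n. \<parallel>s n \<boxminus> r\<parallel>\<^sub>A) \<longlonglongrightarrow> 0"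
    using A_complete[OF Cauchy_A_sum_power[OF assms]] unfolding s_def by blast
  define y where "y = \<one>\<^sub>A \<boxminus> x"
  have bound: "\<parallel>y \<boxtimes> r \<boxminus> \<one>\<^sub>A\<parallel>\<^sub>A \<le> \<parallel>y\<parallel>\<^sub>A * \<parallel>s n \<boxminus> r\<parallel>\<^sub>A + \<parallel>x\<parallel>\<^sub>A ^ n" for n
  proof -
    have "y \<boxtimes> r \<boxminus> \<one>\<^sub>A = y \<boxtimes> (r \<boxminus> s n) \<boxplus> (-1) \<cdot>\<^sub>A A_power A x n"
      using A_minus_split[of "y \<boxtimes> r" "\<one>\<^sub>A" "y \<boxtimes> s n"]
      by (simp add: A_mult_minus_left y_def s_def neumann_telescope A_minus_minus_self)
    hence "\<parallel>y \<boxtimes> r \<boxminus> \<one>\<^sub>A\<parallel>\<^sub>A \<le> \<parallel>y \<boxtimes> (r \<boxminus> s n)\<parallel>\<^sub>A + \<parallel>A_power A x n\<parallel>\<^sub>A"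
      using A_norm_triangle[of "y \<boxtimes> (r \<boxminus> s n)" "(-1) \<cdot>\<^sub>A A_power A x n"] by (simp add: A_norm_smul)
    also have "\<dots> \<le> \<parallel>y\<parallel>\<^sub>A * \<parallel>r \<boxminus> s n\<parallel>\<^sub>A + \<parallel>x\<parallel>\<^sub>A ^ n"
      using A_norm_mult[of y "r \<boxminus> s n"] A_norm_power_le[of x n] by (rule add_mono)
    finally show ?thesis by (simp add: A_norm_minus_commute)
  qed
  have "(\<lambda>n. \<parallel>y\<parallel>\<^sub>A * \<parallel>s n \<boxminus> r\<parallel>\<^sub>A + \<parallel>x\<parallel>\<^sub>A ^ n) \<longlonglongrightarrow> 0"
    using r assms by (auto intro!: tendsto_add_zero tendsto_mult_right_zero LIMSEQ_realpow_zero)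
  hence "\<parallel>y \<boxtimes> r \<boxminus> \<one>\<^sub>A\<parallel>\<^sub>A \<le> 0"
    by (rule LIMSEQ_le_const) (use bound in auto)
  hence "y \<boxtimes> r = \<one>\<^sub>A"
    using A_norm_nonneg A_norm_eq_0_iff A_minus_eq_0 by (meson antisym)
  thus ?thesis unfolding y_def by blast
qed

end

section \<open>Finite-dimensional representations are contractive\<close>

locale star_rep = unital_cstar +
  fixes d :: nat and \<rho> :: "'a \<Rightarrow> complex mat"
  assumes rep: "unital_star_rep A d \<rho>"
begin

lemma rep_carrier [simp]: "\<rho> x \<in> carrier_mat d d"
  using rep unfolding unital_star_rep_def by blast

lemma rep_dim [simp]: "dim_row (\<rho> x) = d" "dim_col (\<rho> x) = d"
  using rep_carrier[of x] unfolding carrier_mat_def by auto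

lemma rep_mult_vec_carrier [simp]: "v \<in> carrier_vec d \<Longrightarrow> \<rho> z *\<^sub>v v \<in> carrier_vec d"
  by (rule mult_mat_vec_carrier[OF rep_carrier])

lemma rep_add: "\<rho> (x \<boxplus> y) = \<rho> x + \<rho> y"
  using rep unfolding unital_star_rep_def lin_map_def by blast

lemma rep_smult: "\<rho> (\<alpha> \<cdot>\<^sub>A x) = \<alpha> \<cdot>\<^sub>m \<rho> x"
  using rep unfolding unital_star_rep_def lin_map_def by blast

lemma rep_mult: "\<rho> (x \<boxtimes> y) = \<rho> x * \<rho> y"
  using rep unfolding unital_star_rep_def by blast

lemma rep_one: "\<rho> \<one>\<^sub>A = 1\<^sub>m d"
  using rep unfolding unital_star_rep_def by blast

lemma rep_star: "\<rho> (x\<^sup>\<star>) = adjoint_mat (\<rho> x)"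
  using rep unfolding unital_star_rep_def adjoint_mat_def by simp

lemma qform_rep_add: "v \<in> carrier_vec d \<Longrightarrow> qform (\<rho> (x \<boxplus> y)) v = qform (\<rho> x) v + qform (\<rho> y) v"
  by (simp add: qform_def rep_add add_mult_distrib_mat_vec[of _ d d] cinner_add_left[of _ d])

lemma qform_rep_smult: "v \<in> carrier_vec d \<Longrightarrow> qform (\<rho> (\<alpha> \<cdot>\<^sub>A x)) v = \<alpha> * qform (\<rho> x) v"
  by (simp add: qform_def rep_smult smult_mat_mult_vec[of _ d] cinner_smult_left)

lemma qform_rep_minus: "v \<in> carrier_vec d \<Longrightarrow> qform (\<rho> (x \<boxminus> y)) v = qform (\<rho> x) v - qform (\<rho> y) v"
  by (simp add: A_minus_def qform_rep_add qform_rep_smult)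

lemma qform_rep_one: "v \<in> carrier_vec d \<Longrightarrow> qform (\<rho> \<one>\<^sub>A) v = complex_of_real ((vnorm v)\<^sup>2)"
  by (simp add: qform_def rep_one cinner_self)

lemma qform_rep_star_mult:
  "v \<in> carrier_vec d \<Longrightarrow> qform (\<rho> (z\<^sup>\<star> \<boxtimes> z)) v = complex_of_real ((vnorm (\<rho> z *\<^sub>v v))\<^sup>2)"
  using qform_adjoint_mult[OF rep_carrier] by (simp add: rep_mult rep_star)

lemma one_minus_rep_bounded_below:
  assumes x: "\<parallel>x\<parallel>\<^sub>A < 1" "x\<^sup>\<star> = x"
    and le: "\<And>w. w \<in> carrier_vec d \<Longrightarrow> Re (qform (\<rho> x) w) \<le> (vnorm w)\<^sup>2"
  shows "\<exists>\<eta>>0. \<forall>w\<in>carrier_vec d. vnorm w = 1 \<longrightarrow> \<eta> \<le> Re (qform (\<rho> (\<one>\<^sub>A \<boxminus> x)) w)"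
proof -
  obtain r where r: "(\<one>\<^sub>A \<boxminus> x) \<boxtimes> r = \<one>\<^sub>A" using one_minus_right_invertible[OF x(1)] by blast
  have "\<rho> (\<one>\<^sub>A \<boxminus> x) * \<rho> r = 1\<^sub>m d" using r by (simp add: rep_one flip: rep_mult)
  hence inv: "\<rho> r * \<rho> (\<one>\<^sub>A \<boxminus> x) = 1\<^sub>m d" by (rule mat_mult_left_right_inverse[OF rep_carrier rep_carrier])
  have herm: "adjoint_mat (\<rho> (\<one>\<^sub>A \<boxminus> x)) = \<rho> (\<one>\<^sub>A \<boxminus> x)"
    using x(2) by (simp add: A_star_minus A_star_one flip: rep_star)
  have psd: "Re (qform (\<rho> (\<one>\<^sub>A \<boxminus> x)) w) \<ge> 0" if "w \<in> carrier_vec d" for w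
    using le[OF that] that by (simp add: qform_rep_minus qform_rep_one)
  show ?thesis by (rule Re_qform_bounded_below[OF rep_carrier rep_carrier inv herm psd])
qed

text \<open>If the largest Rayleigh quotient \<open>\<mu>\<close> of \<open>\<rho> p\<close> exceeded \<open>\<parallel>p\<parallel>\<close>, then \<open>\<rho> (\<one> - p/\<mu>)\<close> would be
  bounded below on the unit sphere, which pushes the Rayleigh quotients of \<open>\<rho> p\<close> strictly below
  \<open>\<mu>\<close>.\<close>

lemma Re_qform_rep_le_norm:
  assumes self_adjoint: "p\<^sup>\<star> = p" and u: "u \<in> carrier_vec d" "vnorm u = 1"
  shows "Re (qform (\<rho> p) u) \<le> \<parallel>p\<parallel>\<^sub>A"
proof -
  define S where "S = {Re (qform (\<rho> p) w) | w. w \<in> carrier_vec d \<and> vnorm w = 1}"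
  have S_ne: "S \<noteq> {}" using u by (auto simp: S_def)
  have "bdd_above S" unfolding S_def by (rule bdd_above_Re_qform_unit_sphere[OF rep_carrier])
  hence le_\<mu>: "Re (qform (\<rho> p) w) \<le> Sup S" if "w \<in> carrier_vec d" "vnorm w = 1" for w
    by (rule cSup_upper[rotated]) (use that in \<open>auto simp: S_def\<close>)
  define \<mu> where "\<mu> = Sup S"
  have "\<mu> \<le> \<parallel>p\<parallel>\<^sub>A"
  proof (rule ccontr)
    assume "\<not> \<mu> \<le> \<parallel>p\<parallel>\<^sub>A"
    hence \<mu>: "\<mu> > \<parallel>p\<parallel>\<^sub>A" "\<mu> > 0" using A_norm_nonneg[of p] by linarith+
    define x where "x = complex_of_real (1 / \<mu>) \<cdot>\<^sub>A p"
    have qform_x: "Re (qform (\<rho> x) w) = Re (qform (\<rho> p) w) / \<mu>" if "w \<in> carrier_vec d" for w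
      using that by (simp add: x_def qform_rep_smult)
    have "\<parallel>x\<parallel>\<^sub>A < 1" using \<mu> by (simp add: x_def A_norm_smul norm_divide divide_less_eq)
    moreover have "x\<^sup>\<star> = x" using self_adjoint by (simp add: x_def A_star_smul)
    moreover have "Re (qform (\<rho> x) w) \<le> (vnorm w)\<^sup>2" if w: "w \<in> carrier_vec d" for w
      using Re_qform_le_on_unit_sphere[OF rep_carrier le_\<mu> w] \<mu>(2)
      by (simp add: qform_x[OF w] \<mu>_def divide_le_eq mult.commute)
    ultimately obtain \<eta> where \<eta>: "\<eta> > 0"
      "\<And>w. w \<in> carrier_vec d \<Longrightarrow> vnorm w = 1 \<Longrightarrow> \<eta> \<le> Re (qform (\<rho> (\<one>\<^sub>A \<boxminus> x)) w)"
      using one_minus_rep_bounded_below by blast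
    have "s \<le> \<mu> - \<mu> * \<eta>" if "s \<in> S" for s
    proof -
      obtain w where w: "w \<in> carrier_vec d" "vnorm w = 1" "s = Re (qform (\<rho> p) w)"
        using \<open>s \<in> S\<close> by (auto simp: S_def)
      thus ?thesis
        using \<eta>(2)[OF w(1,2)] qform_x[OF w(1)] \<mu>(2)
        by (simp add: qform_rep_minus qform_rep_one field_simps)
    qed
    hence "\<mu> \<le> \<mu> - \<mu> * \<eta>" unfolding \<mu>_def using S_ne by (intro cSup_least) auto
    thus False using mult_pos_pos[OF \<mu>(2) \<eta>(1)] by linarith
  qed
  thus ?thesis using le_\<mu>[OF u] \<mu>_def by linarith
qed

lemma vnorm_rep_le:
  assumes v: "v \<in> carrier_vec d"
  shows "vnorm (\<rho> z *\<^sub>v v) \<le> \<parallel>z\<parallel>\<^sub>A * vnorm v"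
proof -
  have "(vnorm (\<rho> z *\<^sub>v v))\<^sup>2 = Re (qform (\<rho> (z\<^sup>\<star> \<boxtimes> z)) v)"
    using qform_rep_star_mult[OF v] by simp
  also have "\<dots> \<le> \<parallel>z\<^sup>\<star> \<boxtimes> z\<parallel>\<^sub>A * (vnorm v)\<^sup>2"
    using Re_qform_le_on_unit_sphere[OF rep_carrier Re_qform_rep_le_norm v]
    by (simp add: A_star_mult A_star_star)
  also have "\<dots> = (\<parallel>z\<parallel>\<^sub>A * vnorm v)\<^sup>2" by (simp add: A_norm_cstar power_mult_distrib)
  finally show ?thesis by (rule power2_le_imp_le) simp
qed

lemma qform_rep_bound:
  assumes v: "v \<in> carrier_vec d"
  shows "cmod (qform (\<rho> z) v) \<le> \<parallel>z\<parallel>\<^sub>A * (vnorm v)\<^sup>2"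
proof -
  have "cmod (qform (\<rho> z) v) \<le> vnorm (\<rho> z *\<^sub>v v) * vnorm v"
    unfolding qform_def by (rule cinner_Cauchy_Schwarz) (use v in auto)
  also have "\<dots> \<le> \<parallel>z\<parallel>\<^sub>A * vnorm v * vnorm v"
    by (rule mult_right_mono[OF vnorm_rep_le[OF v]]) simp
  finally show ?thesis by (simp add: power2_eq_square mult.assoc)
qed

end

section \<open>Positive functionals and vector states\<close>

definition positive_functional :: "'a cstar_alg \<Rightarrow> ('a \<Rightarrow> complex) \<Rightarrow> bool" where
  "positive_functional A \<phi> \<longleftrightarrow>
     (\<forall>x y. \<phi> (cadd A x y) = \<phi> x + \<phi> y) \<and> (\<forall>\<alpha> x. \<phi> (csmul A \<alpha> x) = \<alpha> * \<phi> x) \<and>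
     (\<forall>b. cplx_nonneg (\<phi> (cmul A (cstar A b) b)))"

lemma states_positive_functional: "\<phi> \<in> states A \<Longrightarrow> positive_functional A \<phi>"
  unfolding states_def positive_functional_def by blast

lemma cplx_nonneg_sum: "(\<And>i. i \<in> S \<Longrightarrow> cplx_nonneg (f i)) \<Longrightarrow> cplx_nonneg (sum f S)"
  unfolding cplx_nonneg_def by (induction S rule: infinite_finite_induct) (auto simp: sum_nonneg)

context unital_cstar
begin

lemma A_star_sum: "(A_sum A f m)\<^sup>\<star> = A_sum A (\<lambda>i. (f i)\<^sup>\<star>) m"
  by (induction m) (simp_all add: A_star_add)

lemma A_sum_mult: "A_sum A f m \<boxtimes> y = A_sum A (\<lambda>i. f i \<boxtimes> y) m"
  by (induction m) (simp_all add: A_distrib_right)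

lemma A_mult_sum: "y \<boxtimes> A_sum A f m = A_sum A (\<lambda>i. y \<boxtimes> f i) m"
  by (induction m) (simp_all add: A_distrib_left)

context
  fixes \<phi> assumes \<phi>: "positive_functional A \<phi>"
begin

lemma positive_functional_add: "\<phi> (x \<boxplus> y) = \<phi> x + \<phi> y" and positive_functional_smult: "\<phi> (\<alpha> \<cdot>\<^sub>A x) = \<alpha> * \<phi> x"
  and positive_functional_nonneg: "cplx_nonneg (\<phi> (b\<^sup>\<star> \<boxtimes> b))"
  using \<phi> unfolding positive_functional_def by auto

lemma positive_functional_zero: "\<phi> \<zero>\<^sub>A = 0"
  using positive_functional_smult[of 0 "\<zero>\<^sub>A"] by simp

lemma positive_functional_A_sum: "\<phi> (A_sum A f m) = (\<Sum>i<m. \<phi> (f i))"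
  by (induction m) (simp_all add: positive_functional_zero positive_functional_add)

lemma positive_functional_foldr: "\<phi> (foldr (cadd A) (map f xs) \<zero>\<^sub>A) = (\<Sum>x\<leftarrow>xs. \<phi> (f x))"
  by (induction xs) (simp_all add: positive_functional_zero positive_functional_add)

lemma positive_functional_sesquilinear:
  "\<phi> ((A_sum A (\<lambda>j. w j \<cdot>\<^sub>A b j) m)\<^sup>\<star> \<boxtimes> A_sum A (\<lambda>j. w j \<cdot>\<^sub>A b j) m)
     = (\<Sum>i<m. \<Sum>j<m. cnj (w i) * \<phi> ((b i)\<^sup>\<star> \<boxtimes> b j) * w j)"
proof -
  let ?c = "A_sum A (\<lambda>j. w j \<cdot>\<^sub>A b j) m"
  have "\<phi> (?c\<^sup>\<star> \<boxtimes> ?c) = (\<Sum>i<m. \<phi> ((w i \<cdot>\<^sub>A b i)\<^sup>\<star> \<boxtimes> ?c))"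
    by (simp add: A_star_sum A_sum_mult positive_functional_A_sum)
  also have "\<dots> = (\<Sum>i<m. \<Sum>j<m. \<phi> ((w i \<cdot>\<^sub>A b i)\<^sup>\<star> \<boxtimes> (w j \<cdot>\<^sub>A b j)))"
    by (simp add: A_mult_sum positive_functional_A_sum)
  also have "\<dots> = (\<Sum>i<m. \<Sum>j<m. cnj (w i) * \<phi> ((b i)\<^sup>\<star> \<boxtimes> b j) * w j)"
    by (simp add: A_star_smul A_mult_smul_left A_mult_smul_right positive_functional_smult mult_ac)
  finally show ?thesis .
qed

text \<open>Positivity of the amplification on \<open>M\<^sub>m(A)\<close> reduces to positivity of \<open>\<phi>\<close> on the elements
  \<open>c\<^sub>l\<^sup>\<star> c\<^sub>l\<close>, where \<open>c\<^sub>l = \<Sum>\<^sub>j w\<^sub>j b\<^sub>l\<^sub>j\<close> is the \<open>l\<close>-th row of \<open>b\<close> applied to \<open>w\<close>.\<close>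

lemma state_as_cp_cp_maps: "state_as_cp \<phi> \<in> cp_maps A 1"
proof -
  have "lin_map A (state_as_cp \<phi>)"
    unfolding lin_map_def state_as_cp_def by (auto intro!: eq_matI simp: positive_functional_add positive_functional_smult)
  moreover have "cplx_nonneg (\<Sum>i<m. \<Sum>j<m. \<Sum>r<1. \<Sum>s<1. cnj (w i r) *
        (state_as_cp \<phi> (foldr (cadd A) (map (\<lambda>l. (b l i)\<^sup>\<star> \<boxtimes> b l j) [0..<m]) \<zero>\<^sub>A) $$ (r, s)) * w j s)"
    for m :: nat and b :: "nat \<Rightarrow> nat \<Rightarrow> 'a" and w :: "nat \<Rightarrow> nat \<Rightarrow> complex"
  proof -
    have "(\<Sum>i<m. \<Sum>j<m. \<Sum>r<1. \<Sum>s<1. cnj (w i r) *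
        (state_as_cp \<phi> (foldr (cadd A) (map (\<lambda>l. (b l i)\<^sup>\<star> \<boxtimes> b l j) [0..<m]) \<zero>\<^sub>A) $$ (r, s)) * w j s)
      = (\<Sum>i<m. \<Sum>j<m. \<Sum>l<m. cnj (w i 0) * \<phi> ((b l i)\<^sup>\<star> \<boxtimes> b l j) * w j 0)"
      by (simp add: state_as_cp_def positive_functional_foldr sum_list_sum_nth atLeast0LessThan sum_distrib_left
          sum_distrib_right)
    also have "\<dots> = (\<Sum>i<m. \<Sum>l<m. \<Sum>j<m. cnj (w i 0) * \<phi> ((b l i)\<^sup>\<star> \<boxtimes> b l j) * w j 0)"
      by (rule sum.cong[OF refl], rule sum.swap)
    also have "\<dots> = (\<Sum>l<m. \<Sum>i<m. \<Sum>j<m. cnj (w i 0) * \<phi> ((b l i)\<^sup>\<star> \<boxtimes> b l j) * w j 0)"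
      by (rule sum.swap)
    also have "\<dots> = (\<Sum>l<m. \<phi> ((A_sum A (\<lambda>j. w j 0 \<cdot>\<^sub>A b l j) m)\<^sup>\<star> \<boxtimes> A_sum A (\<lambda>j. w j 0 \<cdot>\<^sub>A b l j) m))"
      by (simp add: positive_functional_sesquilinear)
    finally show ?thesis by (simp add: cplx_nonneg_sum positive_functional_nonneg)
  qed
  ultimately show ?thesis unfolding cp_maps_def by (simp add: Let_def state_as_cp_def)
qed

end

end

context star_rep
begin

lemma vector_functional_positive: "v \<in> carrier_vec d \<Longrightarrow> positive_functional A (\<lambda>x. qform (\<rho> x) v)"
  unfolding positive_functional_def cplx_nonneg_def
  by (simp add: qform_rep_add qform_rep_smult qform_rep_star_mult)

lemma vector_functional_state:
  "v \<in> carrier_vec d \<Longrightarrow> vnorm v = 1 \<Longrightarrow> (\<lambda>x. qform (\<rho> x) v) \<in> states A"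
  using vector_functional_positive[of v] unfolding states_def positive_functional_def
  by (simp add: qform_rep_one)

lemma type_of_singleton: "type_of \<rho> [v] = state_as_cp (\<lambda>x. qform (\<rho> x) v)"
  unfolding type_of_def state_as_cp_def qform_def by (rule ext, rule eq_matI) auto

lemma Xset_1_nonempty_iff:
  "Xset d 1 \<rho> U \<noteq> {} \<longleftrightarrow> (\<exists>v\<in>carrier_vec d. state_as_cp (\<lambda>x. qform (\<rho> x) v) \<in> U)"
proof
  assume "Xset d 1 \<rho> U \<noteq> {}"
  then obtain vs where vs: "length vs = 1" "\<forall>v\<in>set vs. v \<in> carrier_vec d" "type_of \<rho> vs \<in> U"
    unfolding Xset_def by blast
  then obtain v where "vs = [v]" by (metis One_nat_def length_0_conv length_Suc_conv)
  thus "\<exists>v\<in>carrier_vec d. state_as_cp (\<lambda>x. qform (\<rho> x) v) \<in> U"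
    using vs by (auto simp: type_of_singleton)
next
  assume "\<exists>v\<in>carrier_vec d. state_as_cp (\<lambda>x. qform (\<rho> x) v) \<in> U"
  then obtain v where "v \<in> carrier_vec d" "state_as_cp (\<lambda>x. qform (\<rho> x) v) \<in> U" by blast
  hence "[v] \<in> Xset d 1 \<rho> U" by (simp add: Xset_def type_of_singleton)
  thus "Xset d 1 \<rho> U \<noteq> {}" by blast
qed

end

lemma cp_open_basic_nbhd:
  assumes F: "finite F" and e: "e > 0"
  shows "cp_open A k (basic_nbhd A k \<phi> F e)"
  unfolding cp_open_def
proof safe
  show "\<psi> \<in> cp_maps A k" if "\<psi> \<in> basic_nbhd A k \<phi> F e" for \<psi> using that by (simp add: basic_nbhd_def)
next
  fix \<psi> assume \<psi>: "\<psi> \<in> basic_nbhd A k \<phi> F e"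
  define D where "D = (\<lambda>(x, r, s). cmod (\<psi> x $$ (r,s) - \<phi> x $$ (r,s))) ` (F \<times> {..<k} \<times> {..<k})"
  define \<delta> where "\<delta> = Max (insert 0 D)"
  have fin: "finite (insert 0 D)" using F by (simp add: D_def)
  have "\<delta> < e" unfolding \<delta>_def using \<psi> fin e by (subst Max_less_iff) (auto simp: D_def basic_nbhd_def)
  moreover have "basic_nbhd A k \<psi> F (e - \<delta>) \<subseteq> basic_nbhd A k \<phi> F e"
  proof
    fix \<xi> assume \<xi>: "\<xi> \<in> basic_nbhd A k \<psi> F (e - \<delta>)"
    have "cmod (\<xi> x $$ (r,s) - \<phi> x $$ (r,s)) < e" if "x \<in> F" "r < k" "s < k" for x r s
    proof -
      have "cmod (\<psi> x $$ (r,s) - \<phi> x $$ (r,s)) \<le> \<delta>"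
        unfolding \<delta>_def using fin that
        by (intro Max_ge) (auto simp: D_def intro!: image_eqI[of _ _ "(x, r, s)"])
      moreover have "cmod (\<xi> x $$ (r,s) - \<psi> x $$ (r,s)) < e - \<delta>"
        using \<xi> that by (simp add: basic_nbhd_def)
      ultimately show ?thesis
        using norm_triangle_ineq[of "\<xi> x $$ (r,s) - \<psi> x $$ (r,s)" "\<psi> x $$ (r,s) - \<phi> x $$ (r,s)"]
        by simp
    qed
    thus "\<xi> \<in> basic_nbhd A k \<phi> F e" using \<xi> by (simp add: basic_nbhd_def)
  qed
  ultimately show "cp_nbhd A k \<psi> (basic_nbhd A k \<phi> F e)"
    unfolding cp_nbhd_def using F by (intro conjI exI[of _ F] exI[of _ "e - \<delta>"]) (auto simp: basic_nbhd_def)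
qed

section \<open>Countable approximation and measurability\<close>

definition rat_complex :: "complex set" where
  "rat_complex = (\<lambda>(p, q). Complex (real_of_rat p) (real_of_rat q)) ` UNIV"

lemma countable_rat_complex: "countable rat_complex"
  unfolding rat_complex_def by simp

lemma rat_complex_dense:
  assumes "e > 0"
  shows "\<exists>g\<in>rat_complex. cmod (z - g) < e"
proof -
  obtain p where p: "p \<in> \<rat>" "Re z - e/2 < p" "p < Re z"
    using Rats_dense_in_real[of "Re z - e/2" "Re z"] assms by auto
  obtain q where q: "q \<in> \<rat>" "Im z - e/2 < q" "q < Im z"
    using Rats_dense_in_real[of "Im z - e/2" "Im z"] assms by auto
  obtain p' q' where "p = real_of_rat p'" "q = real_of_rat q'"
    using p(1) q(1) Rats_cases by metis
  hence "Complex p q \<in> rat_complex" unfolding rat_complex_def by (auto intro!: image_eqI[of _ _ "(p', q')"])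
  moreover have "cmod (z - Complex p q) < e"
    using cmod_le[of "z - Complex p q"] p q by simp
  ultimately show ?thesis by blast
qed

definition rat_vecs :: "nat \<Rightarrow> complex vec set" where
  "rat_vecs n = {v \<in> carrier_vec n. \<forall>i<n. v$i \<in> rat_complex}"

lemma rat_vecs_carrier: "v \<in> rat_vecs n \<Longrightarrow> v \<in> carrier_vec n"
  by (simp add: rat_vecs_def)

lemma countable_rat_vecs: "countable (rat_vecs n)"
proof -
  have "rat_vecs n \<subseteq> (\<lambda>xs. vec n (\<lambda>i. xs ! i)) ` lists rat_complex"
  proof
    fix v assume v: "v \<in> rat_vecs n"
    hence "map (\<lambda>i. v$i) [0..<n] \<in> lists rat_complex" "v = vec n (\<lambda>i. map (\<lambda>i. v$i) [0..<n] ! i)"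
      by (auto simp: rat_vecs_def)
    thus "v \<in> (\<lambda>xs. vec n (\<lambda>i. xs ! i)) ` lists rat_complex" by blast
  qed
  thus ?thesis by (rule countable_subset) (intro countable_image countable_lists countable_rat_complex)
qed

lemma rat_vecs_approx:
  fixes v :: "complex vec"
  assumes v: "v \<in> carrier_vec n"
  obtains s where "\<And>k. s k \<in> rat_vecs n" "\<And>i. i < n \<Longrightarrow> (\<lambda>k. s k $ i) \<longlonglongrightarrow> v $ i"
proof -
  have "\<forall>k i. \<exists>g\<in>rat_complex. cmod (v$i - g) < 1 / Suc k" using rat_complex_dense by simp
  then obtain g where g: "\<And>k i. g k i \<in> rat_complex" "\<And>k i. cmod (v$i - g k i) < 1 / Suc k"
    by metis
  have "vec n (g k) \<in> rat_vecs n" for k using g by (auto simp: rat_vecs_def)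
  moreover have "(\<lambda>k. vec n (g k) $ i) \<longlonglongrightarrow> v $ i" if i: "i < n" for i
  proof (rule LIMSEQ_I)
    fix r :: real assume "r > 0"
    then obtain N where N: "1 / Suc N < r" using reals_Archimedean by (metis inverse_eq_divide)
    have "norm (vec n (g k) $ i - v $ i) < r" if "k \<ge> N" for k
    proof -
      have "norm (vec n (g k) $ i - v $ i) < 1 / Suc k"
        using i g(2)[of i k] by (simp add: norm_minus_commute)
      also have "\<dots> \<le> 1 / Suc N" using that by (simp add: frac_le)
      finally show ?thesis using N by linarith
    qed
    thus "\<exists>no. \<forall>k\<ge>no. norm (vec n (g k) $ i - v $ i) < r" by blast
  qed
  ultimately show ?thesis by (rule that)
qed

lemma qform_tendsto:
  fixes s :: "nat \<Rightarrow> complex vec" and v :: "complex vec"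
  assumes B: "B \<in> carrier_mat n n" and s: "\<And>k. s k \<in> carrier_vec n" and v: "v \<in> carrier_vec n"
    and lim: "\<And>i. i < n \<Longrightarrow> (\<lambda>k. s k $ i) \<longlonglongrightarrow> v $ i"
  shows "(\<lambda>k. qform B (s k)) \<longlonglongrightarrow> qform B v"
  unfolding qform_expand[OF B s] qform_expand[OF B v] by (auto intro!: tendsto_intros lim)

lemma vnorm_tendsto:
  fixes s :: "nat \<Rightarrow> complex vec" and v :: "complex vec"
  assumes s: "\<And>k. s k \<in> carrier_vec n" and v: "v \<in> carrier_vec n"
    and lim: "\<And>i. i < n \<Longrightarrow> (\<lambda>k. s k $ i) \<longlonglongrightarrow> v $ i"
  shows "(\<lambda>k. vnorm (s k)) \<longlonglongrightarrow> vnorm v"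
proof -
  have "(\<lambda>k. sqrt (\<Sum>i<n. (cmod (s k $ i))\<^sup>2)) \<longlonglongrightarrow> sqrt (\<Sum>i<n. (cmod (v $ i))\<^sup>2)"
    by (auto intro!: tendsto_intros lim)
  moreover have "dim_vec (s k) = n" for k using s[of k] by simp
  ultimately show ?thesis using v by (simp add: vnorm_def)
qed

lemma vnorm_mult_mat_vec_tendsto:
  fixes s :: "nat \<Rightarrow> complex vec" and v :: "complex vec"
  assumes B: "B \<in> carrier_mat n n" and s: "\<And>k. s k \<in> carrier_vec n" and v: "v \<in> carrier_vec n"
    and lim: "\<And>i. i < n \<Longrightarrow> (\<lambda>k. s k $ i) \<longlonglongrightarrow> v $ i"
  shows "(\<lambda>k. vnorm (B *\<^sub>v s k)) \<longlonglongrightarrow> vnorm (B *\<^sub>v v)"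
  unfolding vnorm_mult_mat_vec_expand[OF B s] vnorm_mult_mat_vec_expand[OF B v]
  by (auto intro!: tendsto_intros lim)

lemma exists_rat_vec_near_opnorm:
  assumes B: "B \<in> carrier_mat n n" and c: "c \<le> opnorm B" and \<delta>: "\<delta> > 0"
  shows "\<exists>v\<in>rat_vecs n. vnorm v < 1 + \<delta> \<and> c - \<delta> < vnorm (B *\<^sub>v v)"
proof -
  define S where "S = {vnorm (B *\<^sub>v v) | v. v \<in> carrier_vec n \<and> vnorm v \<le> 1}"
  have "S \<noteq> {}" unfolding S_def by (auto intro!: exI[of _ "0\<^sub>v n"] simp: vnorm_def)
  moreover have "c - \<delta> < Sup S" using B c \<delta> by (simp add: opnorm_def S_def)
  ultimately obtain u where u: "u \<in> carrier_vec n" "vnorm u \<le> 1" "c - \<delta> < vnorm (B *\<^sub>v u)"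
    using less_cSup_iff[OF _ opnorm_bdd_above[OF B, folded S_def]] unfolding S_def by blast
  obtain s where s: "\<And>k. s k \<in> rat_vecs n" and lim: "\<And>i. i < n \<Longrightarrow> (\<lambda>k. s k $ i) \<longlonglongrightarrow> u $ i"
    using rat_vecs_approx[OF u(1)] by blast
  note s_carrier = rat_vecs_carrier[OF s]
  have "(\<lambda>k. vnorm (s k)) \<longlonglongrightarrow> vnorm u" by (rule vnorm_tendsto[OF s_carrier u(1) lim])
  moreover have "vnorm u < 1 + \<delta>" using u(2) \<delta> by linarith
  ultimately have "\<forall>\<^sub>F j in sequentially. vnorm (s j) < 1 + \<delta>" by (rule order_tendstoD(2))
  moreover have "(\<lambda>k. vnorm (B *\<^sub>v s k)) \<longlonglongrightarrow> vnorm (B *\<^sub>v u)"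
    by (rule vnorm_mult_mat_vec_tendsto[OF B s_carrier u(1) lim])
  hence "\<forall>\<^sub>F j in sequentially. c - \<delta> < vnorm (B *\<^sub>v s j)"
    using u(3) by (rule order_tendstoD(1))
  ultimately have "\<forall>\<^sub>F j in sequentially. vnorm (s j) < 1 + \<delta> \<and> c - \<delta> < vnorm (B *\<^sub>v s j)"
    by (rule eventually_conj)
  then obtain j where "vnorm (s j) < 1 + \<delta>" "c - \<delta> < vnorm (B *\<^sub>v s j)"
    unfolding eventually_sequentially by blast
  thus ?thesis using s by blast
qed

lemma le_opnorm_of_rat_vecs:
  assumes B: "B \<in> carrier_mat n n"
    and near: "\<And>k. \<exists>v\<in>rat_vecs n. vnorm v < 1 + inverse (Suc k) \<and> c - inverse (Suc k) < vnorm (B *\<^sub>v v)"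
  shows "c \<le> opnorm B"
proof -
  have bound: "(c - inverse (Suc k)) / (1 + inverse (Suc k)) \<le> opnorm B" for k
  proof -
    define \<delta> :: real where "\<delta> = inverse (Suc k)"
    have \<delta>: "\<delta> > 0" by (simp add: \<delta>_def)
    obtain v where v: "v \<in> rat_vecs n" "vnorm v < 1 + \<delta>" "c - \<delta> < vnorm (B *\<^sub>v v)"
      using near \<delta>_def by blast
    have v_carrier: "v \<in> carrier_vec n" using rat_vecs_carrier[OF v(1)] .
    define t where "t = max 1 (vnorm v)"
    have t: "t \<ge> 1" "t < 1 + \<delta>" "vnorm v \<le> t" using v \<delta> by (auto simp: t_def)
    define u where "u = complex_of_real (1 / t) \<cdot>\<^sub>v v"
    have "vnorm u \<le> 1" using t by (simp add: u_def vnorm_smult norm_divide divide_le_eq)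
    moreover have "vnorm (B *\<^sub>v u) = vnorm (B *\<^sub>v v) / t"
      using t B v_carrier by (simp add: u_def mult_mat_vec[of _ n n] vnorm_smult norm_divide)
    ultimately have "vnorm (B *\<^sub>v v) / t \<le> opnorm B"
      using vnorm_mult_le_opnorm[OF B, of u] v_carrier by (simp add: u_def)
    show ?thesis
    proof (cases "c - \<delta> \<ge> 0")
      case True
      have "(c - \<delta>) / (1 + \<delta>) \<le> (c - \<delta>) / t" using True t \<delta> by (intro divide_left_mono) auto
      also have "\<dots> \<le> vnorm (B *\<^sub>v v) / t" using v(3) t by (intro divide_right_mono) auto
      finally show ?thesis using \<open>vnorm (B *\<^sub>v v) / t \<le> opnorm B\<close> unfolding \<delta>_def by linarith
    next
      case False
      hence "(c - \<delta>) / (1 + \<delta>) \<le> 0" using \<delta> by (simp add: divide_nonpos_pos)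
      thus ?thesis using opnorm_nonneg[OF B] unfolding \<delta>_def by linarith
    qed
  qed
  have "(\<lambda>k. (c - inverse (real (Suc k))) / (1 + inverse (real (Suc k)))) \<longlonglongrightarrow> (c - 0) / (1 + 0)"
    by (intro tendsto_intros LIMSEQ_inverse_real_of_nat) simp
  thus "c \<le> opnorm B" by (intro LIMSEQ_le_const2) (use bound in auto)
qed

lemma le_opnorm_iff_rat_vecs:
  assumes "B \<in> carrier_mat n n"
  shows "c \<le> opnorm B \<longleftrightarrow>
    (\<forall>k. \<exists>v\<in>rat_vecs n. vnorm v < 1 + inverse (Suc k) \<and> c - inverse (Suc k) < vnorm (B *\<^sub>v v))"
  using exists_rat_vec_near_opnorm[OF assms] le_opnorm_of_rat_vecs[OF assms] by auto

context star_rep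
begin

lemma exists_rat_vec_in_open:
  assumes U: "cp_open A 1 U" and v: "v \<in> carrier_vec d"
    and v_U: "state_as_cp (\<lambda>x. qform (\<rho> x) v) \<in> U"
  shows "\<exists>v'\<in>rat_vecs d. state_as_cp (\<lambda>x. qform (\<rho> x) v') \<in> U"
proof -
  obtain F e where F: "finite F" and e: "e > 0"
    and sub: "basic_nbhd A 1 (state_as_cp (\<lambda>x. qform (\<rho> x) v)) F e \<subseteq> U"
    using U v_U unfolding cp_open_def cp_nbhd_def by blast
  obtain s where s: "\<And>k. s k \<in> rat_vecs d" and lim: "\<And>i. i < d \<Longrightarrow> (\<lambda>k. s k $ i) \<longlonglongrightarrow> v $ i"
    using rat_vecs_approx[OF v] by blast
  note s_carrier = rat_vecs_carrier[OF s]
  have "\<forall>\<^sub>F k in sequentially. \<forall>x\<in>F. cmod (qform (\<rho> x) (s k) - qform (\<rho> x) v) < e"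
  proof (rule eventually_ball_finite[OF F], rule ballI)
    fix x
    have "(\<lambda>k. cmod (qform (\<rho> x) (s k) - qform (\<rho> x) v)) \<longlonglongrightarrow> 0"
      using qform_tendsto[OF rep_carrier s_carrier v lim] by (intro tendsto_norm_zero LIM_zero)
    thus "\<forall>\<^sub>F k in sequentially. cmod (qform (\<rho> x) (s k) - qform (\<rho> x) v) < e"
      using e by (rule order_tendstoD(2))
  qed
  then obtain k where "\<forall>x\<in>F. cmod (qform (\<rho> x) (s k) - qform (\<rho> x) v) < e"
    using eventually_sequentially by auto
  hence "state_as_cp (\<lambda>x. qform (\<rho> x) (s k)) \<in> basic_nbhd A 1 (state_as_cp (\<lambda>x. qform (\<rho> x) v)) F e"
    using state_as_cp_cp_maps[OF vector_functional_positive[OF s_carrier]]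
    by (simp add: basic_nbhd_def state_as_cp_def)
  thus ?thesis using sub s by blast
qed

lemma Xset_1_nonempty_iff_rat_vecs:
  assumes U: "cp_open A 1 U"
  shows "Xset d 1 \<rho> U \<noteq> {} \<longleftrightarrow> (\<exists>v\<in>rat_vecs d. state_as_cp (\<lambda>x. qform (\<rho> x) v) \<in> U)"
  using Xset_1_nonempty_iff exists_rat_vec_in_open[OF U] rat_vecs_carrier by blast

end

definition rational_cell :: "'w measure \<Rightarrow> ('w \<Rightarrow> 'a \<Rightarrow> complex) \<Rightarrow> ('a \<times> complex) list \<Rightarrow> rat \<Rightarrow> 'w set" where
  "rational_cell M T L r = {\<omega> \<in> space M. \<forall>(x, z)\<in>set L. cmod (T \<omega> x - z) < real_of_rat r}"

lemma rational_cell_measurable: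
  assumes "\<And>x. (\<lambda>\<omega>. T \<omega> x) \<in> borel_measurable M"
  shows "rational_cell M T L r \<in> sets M"
  unfolding rational_cell_def case_prod_beta
proof (rule sets.sets_Collect_finite_All)
  show "{\<omega> \<in> space M. cmod (T \<omega> (fst p) - snd p) < real_of_rat r} \<in> sets M" for p
    using assms[of "fst p"] by measurable
qed simp

context unital_cstar
begin

text \<open>A uniformly Lipschitz family of functionals is controlled by its values on the countable
  dense set \<open>D\<close>.\<close>

lemma rational_cell_inside_open:
  fixes M :: "'w measure" and T :: "'w \<Rightarrow> 'a \<Rightarrow> complex" and D :: "'a set"
  assumes pos: "\<And>\<omega>. \<omega> \<in> space M \<Longrightarrow> positive_functional A (T \<omega>)"
    and lip: "\<And>\<omega> x y. \<omega> \<in> space M \<Longrightarrow> cmod (T \<omega> x - T \<omega> y) \<le> \<parallel>x \<boxminus> y\<parallel>\<^sub>A * V" and V: "V \<ge> 0"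
    and dense: "\<And>x e. e > 0 \<Longrightarrow> \<exists>y\<in>D. \<parallel>x \<boxminus> y\<parallel>\<^sub>A < e"
    and U: "cp_open A 1 U" and \<omega>\<^sub>0: "\<omega>\<^sub>0 \<in> space M" "state_as_cp (T \<omega>\<^sub>0) \<in> U"
  shows "\<exists>L r. set L \<subseteq> D \<times> rat_complex \<and> \<omega>\<^sub>0 \<in> rational_cell M T L r \<and>
           rational_cell M T L r \<subseteq> {\<omega> \<in> space M. state_as_cp (T \<omega>) \<in> U}"
proof -
  obtain F e where F: "finite F" and e: "e > 0" and sub: "basic_nbhd A 1 (state_as_cp (T \<omega>\<^sub>0)) F e \<subseteq> U"
    using U \<omega>\<^sub>0(2) unfolding cp_open_def cp_nbhd_def by blast
  obtain r where r: "0 < real_of_rat r" "real_of_rat r < e / 4"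
    using Rats_dense_in_real[of 0 "e/4"] e by (auto elim: Rats_cases)
  define \<epsilon> where "\<epsilon> = real_of_rat r"
  have "\<forall>x. \<exists>y'\<in>D. \<parallel>x \<boxminus> y'\<parallel>\<^sub>A < \<epsilon> / (V + 1)"
    using dense r V by (simp add: \<epsilon>_def)
  then obtain y where y: "\<And>x. y x \<in> D" "\<And>x. \<parallel>x \<boxminus> y x\<parallel>\<^sub>A < \<epsilon> / (V + 1)" by metis
  have "\<forall>x. \<exists>z\<in>rat_complex. cmod (T \<omega>\<^sub>0 (y x) - z) < \<epsilon>"
    using rat_complex_dense r by (simp add: \<epsilon>_def)
  then obtain q where q: "\<And>x. q x \<in> rat_complex" "\<And>x. cmod (T \<omega>\<^sub>0 (y x) - q x) < \<epsilon>" by metis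
  obtain xs where xs: "set xs = F" using finite_list[OF F] by blast
  define L where "L = map (\<lambda>x. (y x, q x)) xs"
  have near_y: "cmod (T \<omega> x - T \<omega> (y x)) \<le> \<epsilon>" if "\<omega> \<in> space M" for \<omega> x
  proof -
    have "cmod (T \<omega> x - T \<omega> (y x)) \<le> \<parallel>x \<boxminus> y x\<parallel>\<^sub>A * V" by (rule lip[OF that])
    also have "\<dots> \<le> \<epsilon> / (V + 1) * V" using y(2)[of x] V by (intro mult_right_mono) auto
    also have "\<dots> \<le> \<epsilon>" using r V by (simp add: \<epsilon>_def field_simps)
    finally show ?thesis .
  qed
  have "rational_cell M T L r \<subseteq> {\<omega> \<in> space M. state_as_cp (T \<omega>) \<in> U}"
  proof
    fix \<omega> assume \<omega>: "\<omega> \<in> rational_cell M T L r"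
    hence \<omega>_space: "\<omega> \<in> space M" and cell: "\<And>x. x \<in> F \<Longrightarrow> cmod (T \<omega> (y x) - q x) < \<epsilon>"
      using xs by (auto simp: rational_cell_def L_def \<epsilon>_def)
    have "cmod (T \<omega> x - T \<omega>\<^sub>0 x) < e" if x: "x \<in> F" for x
    proof -
      have "cmod (T \<omega> x - T \<omega>\<^sub>0 x) \<le> cmod (T \<omega> x - T \<omega> (y x)) + cmod (T \<omega> (y x) - q x)
          + cmod (q x - T \<omega>\<^sub>0 (y x)) + cmod (T \<omega>\<^sub>0 (y x) - T \<omega>\<^sub>0 x)"
        by (rule norm_diff_triangle_le[OF norm_diff_triangle_le[OF norm_diff_triangle_le]])
          (rule order_refl)+
      also have "\<dots> < \<epsilon> + \<epsilon> + \<epsilon> + \<epsilon>"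
        using near_y[OF \<omega>_space, of x] cell[OF x] q(2)[of x] near_y[OF \<omega>\<^sub>0(1), of x]
        by (simp add: norm_minus_commute)
      finally have "cmod (T \<omega> x - T \<omega>\<^sub>0 x) < 4 * \<epsilon>" by simp
      thus ?thesis using r by (simp add: \<epsilon>_def)
    qed
    hence "state_as_cp (T \<omega>) \<in> basic_nbhd A 1 (state_as_cp (T \<omega>\<^sub>0)) F e"
      using state_as_cp_cp_maps[OF pos[OF \<omega>_space]] by (simp add: basic_nbhd_def state_as_cp_def)
    thus "\<omega> \<in> {\<omega> \<in> space M. state_as_cp (T \<omega>) \<in> U}" using sub \<omega>_space by auto
  qed
  moreover have "\<omega>\<^sub>0 \<in> rational_cell M T L r"
    using \<omega>\<^sub>0(1) q(2) by (auto simp: rational_cell_def L_def \<epsilon>_def)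
  moreover have "set L \<subseteq> D \<times> rat_complex" using y q by (auto simp: L_def)
  ultimately show ?thesis by blast
qed

lemma state_in_open_measurable:
  fixes M :: "'w measure" and T :: "'w \<Rightarrow> 'a \<Rightarrow> complex"
  assumes sep: "cstar_separable A"
    and pos: "\<And>\<omega>. \<omega> \<in> space M \<Longrightarrow> positive_functional A (T \<omega>)"
    and lip: "\<And>\<omega> x y. \<omega> \<in> space M \<Longrightarrow> cmod (T \<omega> x - T \<omega> y) \<le> \<parallel>x \<boxminus> y\<parallel>\<^sub>A * V" and V: "V \<ge> 0"
    and meas: "\<And>x. (\<lambda>\<omega>. T \<omega> x) \<in> borel_measurable M"
    and U: "cp_open A 1 U"
  shows "{\<omega> \<in> space M. state_as_cp (T \<omega>) \<in> U} \<in> sets M"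
proof -
  obtain D where D: "countable D" and dense: "\<And>x e. e > 0 \<Longrightarrow> \<exists>y\<in>D. \<parallel>x \<boxminus> y\<parallel>\<^sub>A < e"
    using sep unfolding cstar_separable_def by blast
  define W where "W = {\<omega> \<in> space M. state_as_cp (T \<omega>) \<in> U}"
  define I where "I = {(L, r). L \<in> lists (D \<times> rat_complex) \<and> rational_cell M T L r \<subseteq> W}"
  have "W = (\<Union>(L, r)\<in>I. rational_cell M T L r)"
  proof
    show "W \<subseteq> (\<Union>(L, r)\<in>I. rational_cell M T L r)"
    proof
      fix \<omega> assume "\<omega> \<in> W"
      then obtain L r where "set L \<subseteq> D \<times> rat_complex" "\<omega> \<in> rational_cell M T L r"
        "rational_cell M T L r \<subseteq> W"
        using rational_cell_inside_open[where M = M and T = T and D = D, OF pos lip V dense U]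
        unfolding W_def by blast
      thus "\<omega> \<in> (\<Union>(L, r)\<in>I. rational_cell M T L r)" unfolding I_def by blast
    qed
  qed (auto simp: I_def)
  also have "\<dots> \<in> sets M"
  proof (rule sets.countable_UN')
    have "I \<subseteq> lists (D \<times> rat_complex) \<times> UNIV" by (auto simp: I_def)
    thus "countable I"
      by (rule countable_subset) (intro countable_SIGMA countable_lists countableI_type D countable_rat_complex)
  qed (auto intro: rational_cell_measurable[OF meas])
  finally show ?thesis unfolding W_def .
qed

end

locale random_AP = unital_cstar +
  fixes M :: "'w measure" and d :: "nat \<Rightarrow> nat" and \<pi> :: "nat \<Rightarrow> 'w \<Rightarrow> 'a \<Rightarrow> complex mat"
  assumes random_AP: "random_AP_seq A M d \<pi>"
begin

lemma prob_space: "prob_space M"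
  using random_AP unfolding random_AP_seq_def by blast

lemma dim_tendsto: "filterlim d at_top sequentially"
  using random_AP unfolding random_AP_seq_def by blast

lemma star_rep: "\<omega> \<in> space M \<Longrightarrow> star_rep A (d n) (\<pi> n \<omega>)"
  using random_AP unital_cstar_axioms unfolding random_AP_seq_def star_rep_def star_rep_axioms_def by blast

lemma entry_measurable [measurable]: "(\<lambda>\<omega>. \<pi> n \<omega> x $$ (i,j)) \<in> borel_measurable M"
  using random_AP unfolding random_AP_seq_def by blast

lemma qform_measurable:
  assumes v: "v \<in> carrier_vec (d n)"
  shows "(\<lambda>\<omega>. qform (\<pi> n \<omega> x) v) \<in> borel_measurable M"
proof -
  have "(\<lambda>\<omega>. \<Sum>i<d n. (\<Sum>j<d n. \<pi> n \<omega> x $$ (i,j) * v$j) * cnj (v$i)) \<in> borel_measurable M"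
    by (intro borel_measurable_sum borel_measurable_times borel_measurable_const entry_measurable)
  moreover have eq: "qform (\<pi> n \<omega> x) v = (\<Sum>i<d n. (\<Sum>j<d n. \<pi> n \<omega> x $$ (i,j) * v$j) * cnj (v$i))"
    if "\<omega> \<in> space M" for \<omega>
    using qform_expand[OF star_rep.rep_carrier[OF star_rep[OF that]] v] .
  ultimately show ?thesis by (simp add: measurable_cong[OF eq])
qed

lemma vnorm_mult_measurable:
  assumes v: "v \<in> carrier_vec (d n)"
  shows "(\<lambda>\<omega>. vnorm (\<pi> n \<omega> x *\<^sub>v v)) \<in> borel_measurable M"
proof -
  have "(\<lambda>\<omega>. \<Sum>j<d n. \<pi> n \<omega> x $$ (i,j) * v$j) \<in> borel_measurable M" for i
    by (intro borel_measurable_sum borel_measurable_times borel_measurable_const entry_measurable)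
  hence "(\<lambda>\<omega>. sqrt (\<Sum>i<d n. (cmod (\<Sum>j<d n. \<pi> n \<omega> x $$ (i,j) * v$j))\<^sup>2)) \<in> borel_measurable M"
    by measurable
  moreover have eq: "vnorm (\<pi> n \<omega> x *\<^sub>v v) = sqrt (\<Sum>i<d n. (cmod (\<Sum>j<d n. \<pi> n \<omega> x $$ (i,j) * v$j))\<^sup>2)"
    if "\<omega> \<in> space M" for \<omega>
    using vnorm_mult_mat_vec_expand[OF star_rep.rep_carrier[OF star_rep[OF that]] v] .
  ultimately show ?thesis by (simp add: measurable_cong[OF eq])
qed

lemma Xset_event_measurable:
  assumes sep: "cstar_separable A" and U: "cp_open A 1 U"
  shows "{\<omega> \<in> space M. Xset (d n) 1 (\<pi> n \<omega>) U \<noteq> {}} \<in> sets M"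
proof -
  have "{\<omega> \<in> space M. Xset (d n) 1 (\<pi> n \<omega>) U \<noteq> {}}
      = (\<Union>v\<in>rat_vecs (d n). {\<omega> \<in> space M. state_as_cp (\<lambda>x. qform (\<pi> n \<omega> x) v) \<in> U})"
    using star_rep.Xset_1_nonempty_iff_rat_vecs[OF star_rep U] by blast
  also have "\<dots> \<in> sets M"
  proof (intro sets.countable_UN'' countable_rat_vecs)
    fix v assume "v \<in> rat_vecs (d n)"
    hence v: "v \<in> carrier_vec (d n)" by (rule rat_vecs_carrier)
    show "{\<omega> \<in> space M. state_as_cp (\<lambda>x. qform (\<pi> n \<omega> x) v) \<in> U} \<in> sets M"
    proof (rule state_in_open_measurable[OF sep _ _ _ qform_measurable[OF v] U])
      show "positive_functional A (\<lambda>x. qform (\<pi> n \<omega> x) v)" if "\<omega> \<in> space M" for \<omega>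
        using star_rep.vector_functional_positive[OF star_rep[OF that] v] .
      show "cmod (qform (\<pi> n \<omega> x) v - qform (\<pi> n \<omega> y) v) \<le> \<parallel>x \<boxminus> y\<parallel>\<^sub>A * (vnorm v)\<^sup>2"
        if "\<omega> \<in> space M" for \<omega> x y
        using star_rep.qform_rep_bound[OF star_rep[OF that] v, of "x \<boxminus> y"]
        by (simp add: star_rep.qform_rep_minus[OF star_rep[OF that] v])
    qed simp
  qed
  finally show ?thesis .
qed

lemma opnorm_event_measurable:
  "{\<omega> \<in> space M. c \<le> opnorm (\<pi> n \<omega> a)} \<in> sets M"
proof -
  define S where "S k v = {\<omega> \<in> space M. vnorm v < 1 + inverse (Suc k) \<and>
      c - inverse (Suc k) < vnorm (\<pi> n \<omega> a *\<^sub>v v)}" for k v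
  have "{\<omega> \<in> space M. c \<le> opnorm (\<pi> n \<omega> a)} = (\<Inter>k. \<Union>v\<in>rat_vecs (d n). S k v)"
    using le_opnorm_iff_rat_vecs[OF star_rep.rep_carrier[OF star_rep]]
    by (auto simp: S_def)
  also have "\<dots> \<in> sets M"
  proof (rule sets.countable_INT')
    have "S k v \<in> sets M" if "v \<in> rat_vecs (d n)" for k v
    proof -
      have "(\<lambda>\<omega>. vnorm (\<pi> n \<omega> a *\<^sub>v v)) \<in> borel_measurable M"
        by (rule vnorm_mult_measurable[OF rat_vecs_carrier[OF that]])
      thus ?thesis unfolding S_def by measurable
    qed
    thus "range (\<lambda>k. \<Union>v\<in>rat_vecs (d n). S k v) \<subseteq> sets M"
      by (auto intro!: sets.countable_UN'' countable_rat_vecs)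
  qed auto
  finally show ?thesis .
qed

end

section \<open>Exponential rates and the lower bound\<close>

definition normalized_log :: "(nat \<Rightarrow> nat) \<Rightarrow> (nat \<Rightarrow> real) \<Rightarrow> nat \<Rightarrow> ereal" where
  "normalized_log d p n = ereal (1 / real (d n)) * elog (p n)"

lemma rate_eq_normalized_log: "rate M d \<pi> k U = normalized_log d (Pnonempty M d \<pi> k U)"
  by (simp add: rate_def normalized_log_def fun_eq_iff)

lemma normalized_log_mono: "p n \<le> q n \<Longrightarrow> normalized_log d p n \<le> normalized_log d q n"
  unfolding normalized_log_def elog_def by (rule ereal_mult_left_mono) auto

lemma le_exp_of_normalized_log_less:
  assumes "normalized_log d p n < ereal t" "d n > 0"
  shows "p n \<le> exp (t * real (d n))"
proof (cases "p n \<le> 0")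
  case False
  hence "ln (p n) / real (d n) < t" using assms(1) by (simp add: normalized_log_def elog_def)
  hence "ln (p n) < t * real (d n)" using assms(2) by (simp add: divide_less_eq)
  thus ?thesis using False by (metis exp_less_mono exp_ln less_le not_le)
qed (auto intro: order_trans[OF _ less_imp_le[OF exp_gt_zero]])

lemma normalized_log_le_of_le_exp:
  assumes "p n \<le> K * exp (t * real (d n))" "K > 0" "d n > 0"
  shows "normalized_log d p n \<le> ereal (ln K / real (d n) + t)"
proof (cases "p n \<le> 0")
  case False
  have "ln (p n) \<le> ln K + t * real (d n)"
    using assms False by (simp add: ln_mult flip: ln_le_cancel_iff[of "p n"])
  hence "ln (p n) / real (d n) \<le> (ln K + t * real (d n)) / real (d n)"
    by (rule divide_right_mono) simp
  also have "\<dots> = ln K / real (d n) + t" using assms(3) by (simp add: add_divide_distrib)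
  finally have "ln (p n) / real (d n) \<le> ln K / real (d n) + t" .
  thus ?thesis using False by (simp add: normalized_log_def elog_def)
qed (use assms(3) in \<open>simp add: normalized_log_def elog_def\<close>)

text \<open>The number of events only contributes \<open>ln (card \<Psi> + 1) / d\<^sub>n \<rightarrow> 0\<close>.\<close>

lemma limsup_normalized_log_sum_le:
  fixes Q :: "'i \<Rightarrow> nat \<Rightarrow> real"
  assumes \<Psi>: "finite \<Psi>" and d: "filterlim d at_top sequentially"
    and PQ: "\<And>n. P n \<le> (\<Sum>\<psi>\<in>\<Psi>. Q \<psi> n)"
    and Q: "\<And>\<psi>. \<psi> \<in> \<Psi> \<Longrightarrow> limsup (normalized_log d (Q \<psi>)) < ereal t"
  shows "limsup (normalized_log d P) \<le> ereal t"
proof -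
  define m where "m = Max (insert (-\<infinity>) ((\<lambda>\<psi>. limsup (normalized_log d (Q \<psi>))) ` \<Psi>))"
  have "m < ereal t" unfolding m_def using \<Psi> Q by (subst Max_less_iff) auto
  then obtain t' where t': "m < ereal t'" "t' < t" using ereal_dense2 by force
  have "limsup (normalized_log d (Q \<psi>)) < ereal t'" if "\<psi> \<in> \<Psi>" for \<psi>
    using t'(1) order.strict_trans1[OF Max_ge] \<Psi> that unfolding m_def by auto
  hence "\<forall>\<^sub>F n in sequentially. \<forall>\<psi>\<in>\<Psi>. normalized_log d (Q \<psi>) n < ereal t'"
    using \<Psi> by (intro eventually_ball_finite ballI Limsup_lessD) auto
  moreover have "\<forall>\<^sub>F n in sequentially. 1 \<le> d n" using d unfolding filterlim_at_top by blast
  ultimately have "\<forall>\<^sub>F n in sequentially. normalized_log d P n \<le> ereal (ln (card \<Psi> + 1) / real (d n) + t')"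
  proof eventually_elim
    case (elim n)
    have "Q \<psi> n \<le> exp (t' * real (d n))" if "\<psi> \<in> \<Psi>" for \<psi>
      using le_exp_of_normalized_log_less elim that by simp
    hence "(\<Sum>\<psi>\<in>\<Psi>. Q \<psi> n) \<le> (\<Sum>\<psi>\<in>\<Psi>. exp (t' * real (d n)))" by (rule sum_mono)
    hence "P n \<le> (\<Sum>\<psi>\<in>\<Psi>. exp (t' * real (d n)))" using PQ[of n] by linarith
    also have "\<dots> \<le> (card \<Psi> + 1) * exp (t' * real (d n))" by simp
    finally show ?case using elim(2) by (intro normalized_log_le_of_le_exp) simp_all
  qed
  hence "limsup (normalized_log d P) \<le> limsup (\<lambda>n. ereal (ln (card \<Psi> + 1) / real (d n) + t'))"
    by (rule Limsup_mono)
  also have "\<dots> = ereal t'"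
  proof (intro lim_imp_Limsup trivial_limit_sequentially)
    have "filterlim (\<lambda>n. real (d n)) at_infinity sequentially"
      by (intro filterlim_at_top_imp_at_infinity filterlim_compose[OF filterlim_real_sequentially d])
    hence "(\<lambda>n. ln (card \<Psi> + 1) / real (d n) + t') \<longlonglongrightarrow> 0 + t'"
      by (intro tendsto_add tendsto_divide_0[OF tendsto_const] tendsto_const)
    thus "(\<lambda>n. ereal (ln (card \<Psi> + 1) / real (d n) + t')) \<longlonglongrightarrow> ereal t'" by (simp add: tendsto_ereal)
  qed
  finally show ?thesis using t'(2) by (meson ereal_less_eq(3) less_imp_le order_trans)
qed

text \<open>A vector whose type is within \<open>\<delta>\<close> of a state \<open>\<phi>\<close> at \<open>\<one>\<close> and \<open>a\<close> has \<open>\<parallel>v\<parallel>\<^sup>2 < 1 + \<delta>\<close> and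
  \<open>Re \<langle>\<rho>(a) v, v\<rangle> > Re (\<phi> a) - \<delta>\<close>, hence Rayleigh quotient at least \<open>(Re (\<phi> a) - \<delta>) / (1 + \<delta>)\<close>.\<close>

lemma (in star_rep) le_opnorm_of_near_state:
  assumes \<phi>: "\<phi> \<in> states A" and c: "0 < c" and \<delta>: "0 < \<delta>" "\<delta> \<le> 1/2" "c * (1 + \<delta>) + \<delta> \<le> Re (\<phi> a)"
    and v: "v \<in> carrier_vec d"
    and near: "state_as_cp (\<lambda>x. qform (\<rho> x) v) \<in> basic_nbhd A 1 (state_as_cp \<phi>) {\<one>\<^sub>A, a} \<delta>"
  shows "c \<le> opnorm (\<rho> a)"
proof -
  have near: "cmod (qform (\<rho> x) v - \<phi> x) < \<delta>" if "x \<in> {\<one>\<^sub>A, a}" for x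
    using near that unfolding basic_nbhd_def state_as_cp_def by auto
  have "cmod (complex_of_real ((vnorm v)\<^sup>2) - 1) < \<delta>"
    using near[of "\<one>\<^sub>A"] \<phi> qform_rep_one[OF v] unfolding states_def by simp
  hence norm_v: "\<bar>(vnorm v)\<^sup>2 - 1\<bar> < \<delta>" by (metis norm_of_real of_real_1 of_real_diff)
  hence v_pos: "(vnorm v)\<^sup>2 > 0" using \<delta>(2) by linarith
  have "c * (vnorm v)\<^sup>2 \<le> c * (1 + \<delta>)" using norm_v c by (intro mult_left_mono) auto
  also have "\<dots> \<le> Re (qform (\<rho> a) v)"
    using near[of a] abs_Re_le_cmod[of "qform (\<rho> a) v - \<phi> a"] \<delta>(3) by simp
  finally have "c \<le> Re (qform (\<rho> a) v) / (vnorm v)\<^sup>2" using v_pos by (simp add: le_divide_eq)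
  also have "\<dots> \<le> opnorm (\<rho> a)" using v_pos by (intro Re_qform_div_le_opnorm[OF rep_carrier v]) auto
  finally show ?thesis .
qed

context random_AP
begin

definition opnorm_tail :: "'a \<Rightarrow> real \<Rightarrow> nat \<Rightarrow> real" where
  "opnorm_tail a c n = measure M {\<omega> \<in> space M. c \<le> opnorm (\<pi> n \<omega> a)}"

lemma Pnonempty_le_opnorm_tail:
  assumes "\<And>\<omega>. \<omega> \<in> space M \<Longrightarrow> Xset (d n) 1 (\<pi> n \<omega>) U \<noteq> {} \<Longrightarrow> c \<le> opnorm (\<pi> n \<omega> a)"
  shows "Pnonempty M d \<pi> 1 U n \<le> opnorm_tail a c n"
  unfolding Pnonempty_def opnorm_tail_def using assms
  by (intro finite_measure.finite_measure_mono[OF prob_space.finite_measure[OF prob_space]]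
      opnorm_event_measurable) auto

lemma h0_le_liminf_opnorm_tail:
  assumes LD: "LD_convergent A M d \<pi>" and c: "0 < c" "c < c'"
    and \<phi>: "\<phi> \<in> states A" "c' \<le> Re (\<phi> a)"
  shows "h0 A M d \<pi> 1 (state_as_cp \<phi>) \<le> liminf (normalized_log d (opnorm_tail a c))"
proof -
  define \<delta> where "\<delta> = min ((c' - c) / (1 + c)) (1/2)"
  have \<delta>: "\<delta> > 0" "\<delta> \<le> 1/2" "\<delta> \<le> (c' - c) / (1 + c)"
    using c by (auto simp: \<delta>_def min_def)
  hence "\<delta> * (1 + c) \<le> c' - c" using c by (simp add: le_divide_eq)
  hence \<delta>_c: "c * (1 + \<delta>) + \<delta> \<le> Re (\<phi> a)" using \<phi>(2) by (simp add: algebra_simps)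
  define U where "U = basic_nbhd A 1 (state_as_cp \<phi>) {\<one>\<^sub>A, a} \<delta>"
  have \<phi>_cp: "state_as_cp \<phi> \<in> cp_maps A 1"
    by (rule state_as_cp_cp_maps[OF states_positive_functional[OF \<phi>(1)]])
  have U_open: "cp_open A 1 U"
    unfolding U_def using \<delta>(1) by (intro cp_open_basic_nbhd) simp_all
  have U_\<phi>: "state_as_cp \<phi> \<in> U"
    using \<phi>_cp \<delta> by (simp add: U_def basic_nbhd_def)
  have "c \<le> opnorm (\<pi> n \<omega> a)" if \<omega>: "\<omega> \<in> space M" "Xset (d n) 1 (\<pi> n \<omega>) U \<noteq> {}" for n \<omega>
  proof -
    interpret star_rep A "d n" "\<pi> n \<omega>" by (rule star_rep[OF \<omega>(1)])
    show ?thesis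
      using \<omega>(2) Xset_1_nonempty_iff le_opnorm_of_near_state[OF \<phi>(1) c(1) \<delta>(1,2) \<delta>_c]
      unfolding U_def by blast
  qed
  hence "rate M d \<pi> 1 U n \<le> normalized_log d (opnorm_tail a c) n" for n
    unfolding rate_eq_normalized_log by (intro normalized_log_mono Pnonempty_le_opnorm_tail)
  hence "liminf (rate M d \<pi> 1 U) \<le> liminf (normalized_log d (opnorm_tail a c))"
    by (intro Liminf_mono) auto
  moreover have "h0 A M d \<pi> 1 (state_as_cp \<phi>) \<le> liminf (rate M d \<pi> 1 U)"
    using LD \<phi>_cp U_open U_\<phi> unfolding LD_convergent_def by blast
  ultimately show ?thesis by order
qed

lemma sup_I_fun_le_liminf_opnorm_tail:
  assumes LD: "LD_convergent A M d \<pi>" and c: "c > 0"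
  shows "(SUP c'\<in>{c<..}. I_fun A M d \<pi> a c') \<le> liminf (normalized_log d (opnorm_tail a c))"
proof (rule SUP_least)
  fix c' assume "c' \<in> {c<..}"
  thus "I_fun A M d \<pi> a c' \<le> liminf (normalized_log d (opnorm_tail a c))"
    unfolding I_fun_def by (intro Sup_least) (blast intro: h0_le_liminf_opnorm_tail[OF LD c(1)])
qed

end

section \<open>Compactness and the upper bound\<close>

context unital_cstar
begin

definition bounded_states :: "('a \<Rightarrow> complex) set" where
  "bounded_states = {f \<in> states A. \<forall>x. cmod (f x) \<le> \<parallel>x\<parallel>\<^sub>A}"

text \<open>Tychonoff: the bounded states form a closed subset of the product of the discs of radius
  \<open>\<parallel>x\<parallel>\<close>, in the product (pointwise) topology on \<open>'a \<Rightarrow> complex\<close>.\<close>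

lemma compact_bounded_states: "compact bounded_states"
proof -
  have "compactin (product_topology (\<lambda>_. euclidean) UNIV) (PiE UNIV (\<lambda>x. cball (0::complex) \<parallel>x\<parallel>\<^sub>A))"
    by (subst compactin_PiE) auto
  hence discs: "compact (Pi UNIV (\<lambda>x. cball (0::complex) \<parallel>x\<parallel>\<^sub>A))"
    by (simp add: euclidean_product_topology PiE_UNIV_domain)
  have "closed ((\<Inter>x. \<Inter>y. {f. f (x \<boxplus> y) = f x + f y}) \<inter> (\<Inter>\<alpha>. \<Inter>x. {f. f (\<alpha> \<cdot>\<^sub>A x) = \<alpha> * f x})
      \<inter> (\<Inter>b. {f. Im (f (b\<^sup>\<star> \<boxtimes> b)) = 0}) \<inter> (\<Inter>b. {f. 0 \<le> Re (f (b\<^sup>\<star> \<boxtimes> b))}) \<inter> {f. f \<one>\<^sub>A = 1})"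
    by (intro closed_Int closed_INT ballI closed_Collect_eq closed_Collect_le continuous_intros
        continuous_on_product_coordinates)
  moreover have "bounded_states = Pi UNIV (\<lambda>x. cball (0::complex) \<parallel>x\<parallel>\<^sub>A) \<inter>
      ((\<Inter>x. \<Inter>y. {f. f (x \<boxplus> y) = f x + f y}) \<inter> (\<Inter>\<alpha>. \<Inter>x. {f. f (\<alpha> \<cdot>\<^sub>A x) = \<alpha> * f x})
      \<inter> (\<Inter>b. {f. Im (f (b\<^sup>\<star> \<boxtimes> b)) = 0}) \<inter> (\<Inter>b. {f. 0 \<le> Re (f (b\<^sup>\<star> \<boxtimes> b))}) \<inter> {f. f \<one>\<^sub>A = 1})"
    unfolding bounded_states_def states_def cplx_nonneg_def by auto
  ultimately show ?thesis using compact_Int_closed[OF discs] by simp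
qed

end

text \<open>The neighbourhoods of the points of the superlevel set \<open>g \<ge> c\<close>, together with the open sets
  \<open>g < c - 1/(k+1)\<close>, cover \<open>S\<close>; a finite subcover also covers a slightly lower superlevel set.\<close>

lemma compact_superlevel_finite_cover:
  fixes g :: "'b::topological_space \<Rightarrow> real"
  assumes S: "compact S" and g: "continuous_on UNIV g"
    and Nb: "\<And>\<psi>. \<psi> \<in> S \<Longrightarrow> c \<le> g \<psi> \<Longrightarrow> open (Nb \<psi>) \<and> \<psi> \<in> Nb \<psi>"
  obtains \<Psi> N where "finite \<Psi>" "\<Psi> \<subseteq> {\<psi> \<in> S. c \<le> g \<psi>}"
    "\<And>f. f \<in> S \<Longrightarrow> c - inverse (Suc N) \<le> g f \<Longrightarrow> \<exists>\<psi>\<in>\<Psi>. f \<in> Nb \<psi>"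
proof -
  define K where "K = {\<psi> \<in> S. c \<le> g \<psi>}"
  define H where "H k = {f. g f < c - inverse (Suc k)}" for k :: nat
  define G where "G = case_sum Nb H"
  have "open (H k)" for k
    unfolding H_def by (rule open_Collect_less[OF g continuous_on_const])
  hence "open (G T)" if "T \<in> Inl ` K \<union> range Inr" for T
    using that Nb by (auto simp: G_def K_def)
  moreover have "S \<subseteq> (\<Union>T\<in>Inl ` K \<union> range Inr. G T)"
  proof
    fix f assume f: "f \<in> S"
    show "f \<in> (\<Union>T\<in>Inl ` K \<union> range Inr. G T)"
    proof (cases "c \<le> g f")
      case True
      thus ?thesis using f Nb by (auto simp: G_def K_def intro!: bexI[of _ "Inl f"])
    next
      case False
      then obtain k where "inverse (Suc k) < c - g f"
        using reals_Archimedean by (metis diff_gt_0_iff_gt not_le)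
      hence "f \<in> G (Inr k)" by (simp add: G_def H_def)
      thus ?thesis by blast
    qed
  qed
  ultimately obtain C where C: "C \<subseteq> Inl ` K \<union> range Inr" "finite C" "S \<subseteq> (\<Union>T\<in>C. G T)"
    using compactE_image[OF S] by metis
  define N where "N = Max (insert 0 (Inr -` C))"
  have "finite (Inl -` C)" using C(2) by (auto intro: finite_vimageI simp: inj_on_def)
  moreover have "Inl -` C \<subseteq> K" using C(1) by auto
  moreover have "\<exists>\<psi>\<in>Inl -` C. f \<in> Nb \<psi>" if f: "f \<in> S" "c - inverse (Suc N) \<le> g f" for f
  proof -
    obtain T where T: "T \<in> C" "f \<in> G T" using f(1) C(3) by blast
    show ?thesis
    proof (cases T)
      case (Inl \<psi>) thus ?thesis using T by (auto simp: G_def)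
    next
      case (Inr k)
      hence "k \<le> N" unfolding N_def using T C(2) by (intro Max_ge) (auto intro: finite_vimageI)
      hence "inverse (Suc N) \<le> inverse (Suc k)" by (simp add: le_imp_inverse_le)
      moreover have "g f < c - inverse (Suc k)" using T Inr by (simp add: G_def H_def)
      ultimately show ?thesis using f(2) by linarith
    qed
  qed
  ultimately show ?thesis using that unfolding K_def by blast
qed

context unital_cstar
begin

lemma finite_cover_bounded_states:
  fixes F :: "('a \<Rightarrow> complex) \<Rightarrow> 'a set" and e :: "('a \<Rightarrow> complex) \<Rightarrow> real"
  assumes Fe: "\<And>\<psi>. \<psi> \<in> bounded_states \<Longrightarrow> c \<le> Re (\<psi> a) \<Longrightarrow> finite (F \<psi>) \<and> e \<psi> > 0"
  obtains \<Psi> N where "finite \<Psi>" "\<Psi> \<subseteq> {\<psi> \<in> bounded_states. c \<le> Re (\<psi> a)}"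
    "\<And>f. f \<in> bounded_states \<Longrightarrow> c - inverse (Suc N) \<le> Re (f a) \<Longrightarrow>
       \<exists>\<psi>\<in>\<Psi>. \<forall>x\<in>F \<psi>. cmod (f x - \<psi> x) < e \<psi>"
proof (rule compact_superlevel_finite_cover[OF compact_bounded_states])
  show "continuous_on UNIV (\<lambda>f :: 'a \<Rightarrow> complex. Re (f a))"
    by (intro continuous_intros continuous_on_product_coordinates)
  fix \<psi> assume \<psi>: "\<psi> \<in> bounded_states" "c \<le> Re (\<psi> a)"
  have "{f. \<forall>x\<in>F \<psi>. cmod (f x - \<psi> x) < e \<psi>} = (\<Inter>x\<in>F \<psi>. {f. cmod (f x - \<psi> x) < e \<psi>})" by auto
  thus "open {f. \<forall>x\<in>F \<psi>. cmod (f x - \<psi> x) < e \<psi>} \<and> \<psi> \<in> {f. \<forall>x\<in>F \<psi>. cmod (f x - \<psi> x) < e \<psi>}"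
    using Fe[OF \<psi>] by (simp add: open_INT open_Collect_less continuous_intros)
qed (use that in auto)

end

lemma (in star_rep) exists_vector_state_near_opnorm:
  assumes a: "a = b\<^sup>\<star> \<boxtimes> b" and c: "c > 0" "c \<le> opnorm (\<rho> a)" and \<delta>: "\<delta> > 0"
  shows "\<exists>v\<in>carrier_vec d. (\<lambda>x. qform (\<rho> x) v) \<in> bounded_states \<and> c - \<delta> < Re (qform (\<rho> a) v)"
proof -
  have \<rho>a: "\<rho> a = adjoint_mat (\<rho> b) * \<rho> b" by (simp add: a rep_mult rep_star)
  obtain v where v: "v \<in> carrier_vec d" "vnorm v = 1" "c - \<delta> < Re (qform (\<rho> a) v)"
    using exists_unit_Re_qform_gt[OF rep_carrier c(1) c(2)[unfolded \<rho>a] \<delta>] unfolding \<rho>a by blast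
  have "(\<lambda>x. qform (\<rho> x) v) \<in> bounded_states"
    using vector_functional_state[OF v(1,2)] qform_rep_bound[OF v(1)] v(2)
    by (simp add: bounded_states_def)
  thus ?thesis using v by blast
qed

context random_AP
begin

lemma opnorm_tail_le_sum_Pnonempty:
  fixes \<Psi> :: "('a \<Rightarrow> complex) set"
  assumes sep: "cstar_separable A" and a: "a = b\<^sup>\<star> \<boxtimes> b" and c: "c > 0" and \<Psi>: "finite \<Psi>"
    and cover: "\<And>f. f \<in> bounded_states \<Longrightarrow> c - inverse (Suc N) \<le> Re (f a) \<Longrightarrow>
       \<exists>\<psi>\<in>\<Psi>. \<forall>x\<in>F \<psi>. cmod (f x - \<psi> x) < e \<psi>"
    and U: "\<And>\<psi>. \<psi> \<in> \<Psi> \<Longrightarrow> cp_open A 1 (U \<psi>) \<and> basic_nbhd A 1 (state_as_cp \<psi>) (F \<psi>) (e \<psi>) \<subseteq> U \<psi>"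
  shows "opnorm_tail a c n \<le> (\<Sum>\<psi>\<in>\<Psi>. Pnonempty M d \<pi> 1 (U \<psi>) n)"
proof -
  define X where "X \<psi> = {\<omega> \<in> space M. Xset (d n) 1 (\<pi> n \<omega>) (U \<psi>) \<noteq> {}}" for \<psi>
  have X: "X \<psi> \<in> sets M" if "\<psi> \<in> \<Psi>" for \<psi>
    unfolding X_def using U[OF that] by (intro Xset_event_measurable[OF sep]) auto
  have "{\<omega> \<in> space M. c \<le> opnorm (\<pi> n \<omega> a)} \<subseteq> (\<Union>\<psi>\<in>\<Psi>. X \<psi>)"
  proof
    fix \<omega> assume "\<omega> \<in> {\<omega> \<in> space M. c \<le> opnorm (\<pi> n \<omega> a)}"
    hence \<omega>: "\<omega> \<in> space M" "c \<le> opnorm (\<pi> n \<omega> a)" by auto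
    interpret star_rep A "d n" "\<pi> n \<omega>" by (rule star_rep[OF \<omega>(1)])
    obtain v where v: "v \<in> carrier_vec (d n)" "(\<lambda>x. qform (\<pi> n \<omega> x) v) \<in> bounded_states"
      "c - inverse (Suc N) < Re (qform (\<pi> n \<omega> a) v)"
      using exists_vector_state_near_opnorm[OF a c \<omega>(2), of "inverse (Suc N)"] by auto
    then obtain \<psi> where \<psi>: "\<psi> \<in> \<Psi>" "\<forall>x\<in>F \<psi>. cmod (qform (\<pi> n \<omega> x) v - \<psi> x) < e \<psi>"
      using cover by force
    hence "state_as_cp (\<lambda>x. qform (\<pi> n \<omega> x) v) \<in> basic_nbhd A 1 (state_as_cp \<psi>) (F \<psi>) (e \<psi>)"
      using state_as_cp_cp_maps[OF vector_functional_positive[OF v(1)]]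
      by (simp add: basic_nbhd_def state_as_cp_def)
    hence "Xset (d n) 1 (\<pi> n \<omega>) (U \<psi>) \<noteq> {}" using U[OF \<psi>(1)] v(1) Xset_1_nonempty_iff by blast
    thus "\<omega> \<in> (\<Union>\<psi>\<in>\<Psi>. X \<psi>)" using \<psi>(1) \<omega>(1) by (auto simp: X_def)
  qed
  hence "opnorm_tail a c n \<le> measure M (\<Union>\<psi>\<in>\<Psi>. X \<psi>)"
    unfolding opnorm_tail_def using \<Psi> X
    by (intro finite_measure.finite_measure_mono[OF prob_space.finite_measure[OF prob_space]]) auto
  also have "\<dots> \<le> (\<Sum>\<psi>\<in>\<Psi>. measure M (X \<psi>))"
    using \<Psi> X by (intro finite_measure.finite_measure_subadditive_finite[OF
        prob_space.finite_measure[OF prob_space]]) auto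
  finally show ?thesis by (simp add: X_def Pnonempty_def)
qed

text \<open>Every state \<open>\<psi>\<close> with \<open>Re (\<psi> a) \<ge> c\<close> has \<open>h\<^sup>0(\<psi>) \<le> I(c) < t\<close>, so LD convergence gives it a
  neighbourhood of exponential rate below \<open>t\<close>; finitely many of them cover the event
  \<open>\<parallel>\<pi>\<^sub>n(a)\<parallel> \<ge> c\<close>.\<close>

lemma limsup_opnorm_tail_le:
  assumes sep: "cstar_separable A" and LD: "LD_convergent A M d \<pi>" and a: "cpositive A a"
    and c: "c > 0" and t: "I_fun A M d \<pi> a c < ereal t"
  shows "limsup (normalized_log d (opnorm_tail a c)) \<le> ereal t"
proof -
  obtain b where b: "a = b\<^sup>\<star> \<boxtimes> b" using a unfolding cpositive_def by blast
  have "\<exists>U F e. cp_open A 1 U \<and> limsup (rate M d \<pi> 1 U) < ereal t \<and> finite F \<and> e > 0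
      \<and> basic_nbhd A 1 (state_as_cp \<psi>) F e \<subseteq> U"
    if \<psi>: "\<psi> \<in> bounded_states" "c \<le> Re (\<psi> a)" for \<psi>
  proof -
    have state: "\<psi> \<in> states A" using \<psi>(1) by (simp add: bounded_states_def)
    have "h0 A M d \<pi> 1 (state_as_cp \<psi>) \<le> I_fun A M d \<pi> a c"
      unfolding I_fun_def by (rule Sup_upper) (use state \<psi>(2) in blast)
    hence "h0 A M d \<pi> 1 (state_as_cp \<psi>) < ereal t" using t by order
    moreover have "state_as_cp \<psi> \<in> cp_maps A 1"
      by (rule state_as_cp_cp_maps[OF states_positive_functional[OF state]])
    ultimately obtain U where U: "cp_open A 1 U" "state_as_cp \<psi> \<in> U" "limsup (rate M d \<pi> 1 U) < ereal t"
      using LD unfolding LD_convergent_def by blast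
    then obtain F e where "finite F" "e > 0" "basic_nbhd A 1 (state_as_cp \<psi>) F e \<subseteq> U"
      unfolding cp_open_def cp_nbhd_def by blast
    thus ?thesis using U by blast
  qed
  then obtain U F e where Ufe: "\<And>\<psi>. \<psi> \<in> bounded_states \<Longrightarrow> c \<le> Re (\<psi> a) \<Longrightarrow>
      cp_open A 1 (U \<psi>) \<and> limsup (rate M d \<pi> 1 (U \<psi>)) < ereal t \<and> finite (F \<psi>) \<and> e \<psi> > 0
      \<and> basic_nbhd A 1 (state_as_cp \<psi>) (F \<psi>) (e \<psi>) \<subseteq> U \<psi>"
    by metis
  obtain \<Psi> N where \<Psi>: "finite \<Psi>" "\<Psi> \<subseteq> {\<psi> \<in> bounded_states. c \<le> Re (\<psi> a)}"
    and cover: "\<And>f. f \<in> bounded_states \<Longrightarrow> c - inverse (Suc N) \<le> Re (f a) \<Longrightarrow>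
       \<exists>\<psi>\<in>\<Psi>. \<forall>x\<in>F \<psi>. cmod (f x - \<psi> x) < e \<psi>"
    using finite_cover_bounded_states[of c a F e] Ufe by blast
  show ?thesis
  proof (rule limsup_normalized_log_sum_le[OF \<Psi>(1) dim_tendsto])
    show "opnorm_tail a c n \<le> (\<Sum>\<psi>\<in>\<Psi>. Pnonempty M d \<pi> 1 (U \<psi>) n)" for n
      using \<Psi>(2) Ufe by (intro opnorm_tail_le_sum_Pnonempty[OF sep b c \<Psi>(1) cover]) auto
    show "limsup (normalized_log d (Pnonempty M d \<pi> 1 (U \<psi>))) < ereal t" if "\<psi> \<in> \<Psi>" for \<psi>
      using Ufe \<Psi>(2) that by (auto simp flip: rate_eq_normalized_log)
  qed
qed

lemma limsup_opnorm_tail_le_I_fun: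
  assumes "cstar_separable A" "LD_convergent A M d \<pi>" "cpositive A a" "c > 0"
  shows "limsup (normalized_log d (opnorm_tail a c)) \<le> I_fun A M d \<pi> a c"
  using limsup_opnorm_tail_le[OF assms] ereal_dense2 not_le by metis

end

theorem proposition6p6:
  fixes A :: "'a cstar_alg" and M :: "'w measure" and d :: "nat \<Rightarrow> nat"
    and \<pi> :: "nat \<Rightarrow> 'w \<Rightarrow> 'a \<Rightarrow> complex mat" and a :: 'a and c :: real
  assumes "cstar_algebra A" and "cstar_separable A"
    and "random_AP_seq A M d \<pi>" and "LD_convergent A M d \<pi>"
    and "cpositive A a" and "c > 0"
  defines "P \<equiv> (\<lambda>n. measure M {\<omega> \<in> space M. opnorm (\<pi> n \<omega> a) \<ge> c})"
  shows "limsup (\<lambda>n. ereal (1 / real (d n)) * elog (P n)) \<le> I_fun A M d \<pi> a c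
       \<and> liminf (\<lambda>n. ereal (1 / real (d n)) * elog (P n)) \<ge> (SUP c'\<in>{c<..}. I_fun A M d \<pi> a c')"
proof -
  interpret random_AP A M d \<pi>
    using assms(1,3) by (simp add: random_AP_def random_AP_axioms_def unital_cstar_def)
  have "(\<lambda>n. ereal (1 / real (d n)) * elog (P n)) = normalized_log d (opnorm_tail a c)"
    by (simp add: fun_eq_iff normalized_log_def opnorm_tail_def P_def)
  thus ?thesis
    using limsup_opnorm_tail_le_I_fun[OF assms(2,4,5,6)]
      sup_I_fun_le_liminf_opnorm_tail[OF assms(4,6)] by simp
qed

end
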